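(* Assume $\gamma'\le0$ on $\mathbb R$. Let $(\psi,\eta,\alpha)$ solve (W1)–(W8) and let $v$ be the conformal vertical velocity. If $v\le0$ on $\Gamma^+$, then either $v<0$ in $\Gamma^+\cup\mathcal R^+$, or $v\equiv0$.
   Context: Standing setup: $\mathcal R=\{(x,y):0<y<1\}$, $\Gamma=\{y=1\}$, $B=\{y=0\}$, $\mathcal R^+=\mathcal R\cap\{x>0\}$, $\Gamma^+=\Gamma\cap\{x>0\}$, $\beta\in(0,1)$. $\gamma\in C^{2,1}_{\rm loc}(\mathbb R)$; $\psi_{\rm triv}''=-\gamma(\psi_{\rm triv})$ on $[0,1]$, $\psi_{\rm triv}(0)=0$, $\psi_{\rm triv}(1)=1$, $\psi_{\rm triv}'>0$ on $[0,1]$; $\mu=\psi_{\rm triv}'(1)^2$. Given $\alpha\in\mathbb R$, the problem for $(\psi,\eta)$ is: (W1) $\Delta\psi=-\gamma(\psi)|\nabla\eta|^2$ in $\mathcal R$; (W2) $\psi=1$ on $\Gamma$, $\psi=0$ on $B$; (W3) $\psi_y^2=(\mu-2\alpha(\eta-1))|\nabla\eta|^2$ on $\Gamma$; (W4) $\Delta\eta=0$ in $\mathcal R$, $\eta=0$ on $B$; (W5) $\psi(x,y)\to\psi_{\rm triv}(y)$, $\eta(x,y)\to y$ as $x\to\pm\infty$ uniformly in $y$; (W6) $\psi,\eta\in C^{3+\beta}_b(\overline{\mathcal R})$; (W7) $\psi,\eta$ even in $x$; (W8) $\inf_{\mathcal R}(\mu-2\alpha(\eta-1))|\nabla\eta|^2>0$.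 Velocity in conformal variables: $u=\dfrac{\psi_x\eta_x+\psi_y\eta_y}{\eta_x^2+\eta_y^2}$, $v=\dfrac{\psi_y\eta_x-\psi_x\eta_y}{\eta_x^2+\eta_y^2}$. *)

theory Defs
  imports "HOL-Analysis.Analysis"
begin

definition strip :: "(real \<times> real) set" where
  "strip = {p. 0 < snd p \<and> snd p < 1}"

definition cstrip :: "(real \<times> real) set" where
  "cstrip = {p. 0 \<le> snd p \<and> snd p \<le> 1}"

definition Gamma_plus :: "(real \<times> real) set" where
  "Gamma_plus = {p. snd p = 1 \<and> 0 < fst p}"

definition R_plus :: "(real \<times> real) set" where
  "R_plus = {p. 0 < snd p \<and> snd p < 1 \<and> 0 < fst p}"

text \<open>Partial derivatives on the closed strip (one-sided in y on the boundary lines).\<close>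

definition Dx :: "(real \<times> real \<Rightarrow> real) \<Rightarrow> real \<times> real \<Rightarrow> real" where
  "Dx f p = vector_derivative (\<lambda>t. f (t, snd p)) (at (fst p))"

definition Dy :: "(real \<times> real \<Rightarrow> real) \<Rightarrow> real \<times> real \<Rightarrow> real" where
  "Dy f p = vector_derivative (\<lambda>t. f (fst p, t)) (at (snd p) within {0..1})"

definition has_Dx :: "(real \<times> real \<Rightarrow> real) \<Rightarrow> real \<times> real \<Rightarrow> bool" where
  "has_Dx f p \<longleftrightarrow> (\<lambda>t. f (t, snd p)) differentiable (at (fst p))"

definition has_Dy :: "(real \<times> real \<Rightarrow> real) \<Rightarrow> real \<times> real \<Rightarrow> bool" where
  "has_Dy f p \<longleftrightarrow> (\<lambda>t. f (fst p, t)) differentiable (at (snd p) within {0..1})"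

text \<open>Iterated partial derivative: True = d/dx, False = d/dy; the last list entry is applied first.\<close>

fun pd :: "bool list \<Rightarrow> (real \<times> real \<Rightarrow> real) \<Rightarrow> real \<times> real \<Rightarrow> real" where
  "pd [] f = f"
| "pd (d # ds) f = (if d then Dx (pd ds f) else Dy (pd ds f))"

definition holder_Ckb :: "nat \<Rightarrow> real \<Rightarrow> (real \<times> real \<Rightarrow> real) \<Rightarrow> bool" where
  "holder_Ckb k \<beta> f \<longleftrightarrow>
     (\<forall>ds. length ds < k \<longrightarrow> (\<forall>p\<in>cstrip. has_Dx (pd ds f) p \<and> has_Dy (pd ds f) p)) \<and>
     (\<forall>ds. length ds \<le> k \<longrightarrow> continuous_on cstrip (pd ds f) \<and>
                              bounded (pd ds f ` cstrip)) \<and>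
     (\<forall>ds. length ds = k \<longrightarrow> (\<exists>C. \<forall>p\<in>cstrip. \<forall>q\<in>cstrip.
                   \<bar>pd ds f p - pd ds f q\<bar> \<le> C * dist p q powr \<beta>))"

definition C21_loc :: "(real \<Rightarrow> real) \<Rightarrow> bool" where
  "C21_loc g \<longleftrightarrow> (\<forall>x. g differentiable (at x)) \<and> (\<forall>x. deriv g differentiable (at x)) \<and>
     (\<forall>a b. \<exists>L. \<forall>x\<in>{a..b}. \<forall>y\<in>{a..b}.
        \<bar>deriv (deriv g) x - deriv (deriv g) y\<bar> \<le> L * \<bar>x - y\<bar>)"

definition triv_profile :: "(real \<Rightarrow> real) \<Rightarrow> (real \<Rightarrow> real) \<Rightarrow> (real \<Rightarrow> real) \<Rightarrow> bool" where
  "triv_profile g pt dpt \<longleftrightarrow>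
     (\<forall>y\<in>{0..1}. (pt has_real_derivative dpt y) (at y within {0..1}) \<and>
                  (dpt has_real_derivative (- g (pt y))) (at y within {0..1}) \<and>
                  dpt y > 0) \<and> pt 0 = 0 \<and> pt 1 = 1"

definition gradsq :: "(real \<times> real \<Rightarrow> real) \<Rightarrow> real \<times> real \<Rightarrow> real" where
  "gradsq f p = (Dx f p)\<^sup>2 + (Dy f p)\<^sup>2"

definition lap :: "(real \<times> real \<Rightarrow> real) \<Rightarrow> real \<times> real \<Rightarrow> real" where
  "lap f p = Dx (Dx f) p + Dy (Dy f) p"

text \<open>The problem (W1)--(W8) for (psi, eta) with parameter alpha, mu = psi_triv'(1)^2.\<close>

definition solves_W :: "(real \<Rightarrow> real) \<Rightarrow> real \<Rightarrow> (real \<Rightarrow> real) \<Rightarrow> real \<Rightarrow> real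
     \<Rightarrow> (real \<times> real \<Rightarrow> real) \<Rightarrow> (real \<times> real \<Rightarrow> real) \<Rightarrow> bool" where
  "solves_W g \<beta> pt \<mu> \<alpha> \<psi> \<eta> \<longleftrightarrow>
     (\<forall>p\<in>strip. lap \<psi> p = - g (\<psi> p) * gradsq \<eta> p) \<and>
     (\<forall>x. \<psi> (x, 1) = 1 \<and> \<psi> (x, 0) = 0) \<and>
     (\<forall>x. (Dy \<psi> (x, 1))\<^sup>2 = (\<mu> - 2 * \<alpha> * (\<eta> (x, 1) - 1)) * gradsq \<eta> (x, 1)) \<and>
     (\<forall>p\<in>strip. lap \<eta> p = 0) \<and> (\<forall>x. \<eta> (x, 0) = 0) \<and>
     (\<forall>\<epsilon>>0. \<exists>M. \<forall>x y. M \<le> \<bar>x\<bar> \<and> 0 \<le> y \<and> y \<le> 1 \<longrightarrow>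
          \<bar>\<psi> (x, y) - pt y\<bar> < \<epsilon> \<and> \<bar>\<eta> (x, y) - y\<bar> < \<epsilon>) \<and>
     holder_Ckb 3 \<beta> \<psi> \<and> holder_Ckb 3 \<beta> \<eta> \<and>
     (\<forall>x y. 0 \<le> y \<and> y \<le> 1 \<longrightarrow> \<psi> (-x, y) = \<psi> (x, y) \<and> \<eta> (-x, y) = \<eta> (x, y)) \<and>
     (\<exists>c>0. \<forall>p\<in>strip. (\<mu> - 2 * \<alpha> * (\<eta> p - 1)) * gradsq \<eta> p \<ge> c)"

definition vvel :: "(real \<times> real \<Rightarrow> real) \<Rightarrow> (real \<times> real \<Rightarrow> real) \<Rightarrow> real \<times> real \<Rightarrow> real" where
  "vvel \<psi> \<eta> p = (Dy \<psi> p * Dx \<eta> p - Dx \<psi> p * Dy \<eta> p) / gradsq \<eta> p"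

end

theory Submission
  imports Defs
begin

text \<open>
  Write \<open>grad psi = u grad eta + v (grad eta)\<^sup>\<bottom>\<close>, where \<open>(u, v)\<close> is the velocity in
  conformal variables. Since \<open>eta\<close> is harmonic, (W1) becomes the first-order system
  \<open>u\<^sub>x + v\<^sub>y = - gamma(psi) eta\<^sub>x\<close>, \<open>u\<^sub>y - v\<^sub>x = - gamma(psi) eta\<^sub>y\<close>, and differentiating once more gives
  \<open>Delta v = c v\<close> with \<open>c = - gamma'(psi) |grad eta|\<^sup>2 \<ge> 0\<close>. Evenness makes \<open>v\<close> odd in \<open>x\<close>, so it
  vanishes on the axis as well as on the bed; the weak maximum principle on the half strip then gives
  \<open>v \<le> 0\<close>, and the strong maximum principle (Hopf's lemma on discs) gives \<open>v < 0\<close> or \<open>v = 0\<close>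
  throughout \<open>R\<^sup>+\<close>. In the first case a zero of \<open>v\<close> on \<open>Gamma\<^sup>+\<close> is impossible:
  differentiating the Bernoulli condition \<open>u\<^sup>2 + v\<^sup>2 = mu - 2 alpha (eta - 1)\<close> along the top and
  using the first-order system forces \<open>v\<^sub>y = 0\<close> there, contradicting Hopf's lemma.
\<close>

section \<open>Partial derivatives on the strip\<close>

lemma has_Dx_derivative: "has_Dx f p \<Longrightarrow> ((\<lambda>t. f (t, snd p)) has_real_derivative Dx f p) (at (fst p))"
  unfolding has_Dx_def Dx_def
  by (simp add: vector_derivative_works has_real_derivative_iff_has_vector_derivative)

lemma Dx_eqI: "((\<lambda>t. f (t, snd p)) has_real_derivative d) (at (fst p)) \<Longrightarrow> Dx f p = d"
  unfolding Dx_def by (simp add: has_real_derivative_iff_has_vector_derivative vector_derivative_at)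

lemma has_DxI: "((\<lambda>t. f (t, snd p)) has_real_derivative d) (at (fst p)) \<Longrightarrow> has_Dx f p"
  unfolding has_Dx_def using real_differentiable_def by blast

lemma has_Dy_derivative:
  "has_Dy f p \<Longrightarrow> ((\<lambda>t. f (fst p, t)) has_real_derivative Dy f p) (at (snd p) within {0..1})"
  unfolding has_Dy_def Dy_def
  by (simp add: vector_derivative_works has_real_derivative_iff_has_vector_derivative)

lemma Dy_eqI:
  "((\<lambda>t. f (fst p, t)) has_real_derivative d) (at (snd p) within {0..1}) \<Longrightarrow> snd p \<in> {0..1}
   \<Longrightarrow> Dy f p = d"
  unfolding Dy_def
  by (rule vector_derivative_within_closed_interval)
    (auto simp: has_real_derivative_iff_has_vector_derivative)

lemma has_DyI: "((\<lambda>t. f (fst p, t)) has_real_derivative d) (at (snd p) within {0..1}) \<Longrightarrow> has_Dy f p"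
  unfolding has_Dy_def using real_differentiable_def by blast

lemma strip_cstrip: "z \<in> strip \<Longrightarrow> z \<in> cstrip"
  by (auto simp: strip_def cstrip_def)

lemma at_within_01_strip: "p \<in> strip \<Longrightarrow> at (snd p) within {0..1} = at (snd p)"
  by (rule at_within_Icc_at) (auto simp: strip_def)

lemma has_Dx_derivative_Pair:
  "has_Dx f (a, b) \<Longrightarrow> ((\<lambda>t. f (t, b)) has_real_derivative Dx f (a, b)) (at a)"
  using has_Dx_derivative[of f "(a, b)"] by simp

lemma has_Dy_derivative_at_Pair:
  "has_Dy f (a, b) \<Longrightarrow> (a, b) \<in> strip \<Longrightarrow> ((\<lambda>t. f (a, t)) has_real_derivative Dy f (a, b)) (at b)"
  using has_Dy_derivative[of f "(a, b)"] at_within_01_strip[of "(a, b)"] by simp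

lemma Dx_eqI_Pair: "((\<lambda>t. f (t, y)) has_real_derivative d) (at x) \<Longrightarrow> Dx f (x, y) = d"
  using Dx_eqI[of f "(x, y)" d] by simp

lemma Dy_eqI_Pair:
  "((\<lambda>t. f (x, t)) has_real_derivative d) (at y) \<Longrightarrow> (x, y) \<in> strip \<Longrightarrow> Dy f (x, y) = d"
  using Dy_eqI[of f "(x, y)" d] at_within_01_strip[of "(x, y)"] by (auto simp: strip_def)

lemma Dx_cong:
  "(\<And>t. f (t, snd p) = g (t, snd p)) \<Longrightarrow> Dx f p = Dx g p \<and> (has_Dx f p \<longleftrightarrow> has_Dx g p)"
  unfolding Dx_def has_Dx_def by simp

lemma Dy_cong:
  assumes "\<And>t. t \<in> {0..1} \<Longrightarrow> f (fst p, t) = g (fst p, t)" "snd p \<in> {0..1}"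
  shows "Dy f p = Dy g p \<and> (has_Dy f p \<longleftrightarrow> has_Dy g p)"
proof
  show "Dy f p = Dy g p" unfolding Dy_def
    by (rule vector_derivative_cong_eq) (use assms in auto)
  have "\<And>D. ((\<lambda>t. f (fst p, t)) has_real_derivative D) (at (snd p) within {0..1}) =
      ((\<lambda>t. g (fst p, t)) has_real_derivative D) (at (snd p) within {0..1})"
    by (rule has_field_derivative_cong_ev) (use assms in \<open>auto simp: eventually_at_filter\<close>)
  then show "has_Dy f p \<longleftrightarrow> has_Dy g p" unfolding has_Dy_def real_differentiable_def by simp
qed

lemma Dy_cong_open:
  assumes "\<And>t. t \<in> {0<..<1} \<Longrightarrow> f (fst p, t) = g (fst p, t)" "snd p \<in> {0<..<1}"
  shows "Dy f p = Dy g p \<and> (has_Dy f p \<longleftrightarrow> has_Dy g p)"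
proof
  have ev: "\<forall>\<^sub>F x in nhds (snd p). x \<in> {0..1} \<longrightarrow> f (fst p, x) = g (fst p, x)"
    unfolding eventually_nhds using assms by (intro exI[of _ "{0<..<1}"]) auto
  show "Dy f p = Dy g p" unfolding Dy_def
    by (rule vector_derivative_cong_eq) (use assms ev in auto)
  have "\<And>D. ((\<lambda>t. f (fst p, t)) has_real_derivative D) (at (snd p) within {0..1}) =
      ((\<lambda>t. g (fst p, t)) has_real_derivative D) (at (snd p) within {0..1})"
    by (rule has_field_derivative_cong_ev) (use assms ev in auto)
  then show "has_Dy f p \<longleftrightarrow> has_Dy g p" unfolding has_Dy_def real_differentiable_def by simp
qed

section \<open>Functions of class \<open>C\<^sup>k\<close> on the closed strip\<close>

text \<open>The smoothness part of \<open>holder_Ckb\<close>, in recursive form.\<close>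

fun Ck_cstrip :: "nat \<Rightarrow> (real \<times> real \<Rightarrow> real) \<Rightarrow> bool" where
  "Ck_cstrip 0 f = continuous_on cstrip f"
| "Ck_cstrip (Suc k) f \<longleftrightarrow> continuous_on cstrip f \<and> (\<forall>p\<in>cstrip. has_Dx f p \<and> has_Dy f p) \<and>
     Ck_cstrip k (Dx f) \<and> Ck_cstrip k (Dy f)"

lemma Ck_cstrip_continuous: "Ck_cstrip k f \<Longrightarrow> continuous_on cstrip f"
  by (cases k) auto

lemma Ck_cstrip_cong: "Ck_cstrip k f \<Longrightarrow> (\<And>p. p \<in> cstrip \<Longrightarrow> f p = g p) \<Longrightarrow> Ck_cstrip k g"
proof (induction k arbitrary: f g)
  case 0
  then show ?case using continuous_on_cong by auto
next
  case (Suc k)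
  have eq: "Dx f p = Dx g p \<and> (has_Dx f p \<longleftrightarrow> has_Dx g p) \<and> Dy f p = Dy g p \<and> (has_Dy f p \<longleftrightarrow> has_Dy g p)"
    if "p \<in> cstrip" for p
    using Dx_cong[of f p g] Dy_cong[of f p g] Suc.prems(2) that by (auto simp: cstrip_def)
  have "Ck_cstrip k (Dx g)" "Ck_cstrip k (Dy g)"
    using Suc.IH[of "Dx f" "Dx g"] Suc.IH[of "Dy f" "Dy g"] Suc.prems eq by simp_all
  moreover have "continuous_on cstrip g"
    using Suc.prems continuous_on_cong[of cstrip cstrip f g] by simp
  ultimately show ?case using eq Suc.prems by simp
qed

lemma Ck_cstrip_SucI:
  assumes "continuous_on cstrip f"
    and "\<And>p. p \<in> cstrip \<Longrightarrow> ((\<lambda>t. f (t, snd p)) has_real_derivative fx p) (at (fst p))"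
    and "\<And>p. p \<in> cstrip \<Longrightarrow> ((\<lambda>t. f (fst p, t)) has_real_derivative fy p) (at (snd p) within {0..1})"
    and "Ck_cstrip k fx" "Ck_cstrip k fy"
  shows "Ck_cstrip (Suc k) f"
proof -
  have "Dx f p = fx p" "Dy f p = fy p" "has_Dx f p" "has_Dy f p" if "p \<in> cstrip" for p
    using assms(2,3)[OF that] that by (auto intro: Dx_eqI Dy_eqI has_DxI has_DyI simp: cstrip_def)
  then show ?thesis using assms(1,4,5) Ck_cstrip_cong[of k fx "Dx f"] Ck_cstrip_cong[of k fy "Dy f"]
    by auto
qed

lemma Ck_cstrip_Suc_imp: "Ck_cstrip (Suc k) f \<Longrightarrow> Ck_cstrip k f"
proof (induction k arbitrary: f)
  case (Suc k)
  then show ?case by (subst Ck_cstrip.simps) (meson Ck_cstrip.simps(2))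
qed simp

lemma Ck_cstrip_mono: "Ck_cstrip k f \<Longrightarrow> j \<le> k \<Longrightarrow> Ck_cstrip j f"
  by (induction k) (auto intro: Ck_cstrip_Suc_imp simp del: Ck_cstrip.simps simp: le_Suc_eq)

lemma Ck_cstrip_const: "Ck_cstrip k (\<lambda>p. c)"
proof (induction k arbitrary: c)
  case (Suc k)
  show ?case by (rule Ck_cstrip_SucI[OF _ _ _ Suc[of 0] Suc[of 0]]) auto
qed simp

lemma Ck_cstrip_add: "Ck_cstrip k f \<Longrightarrow> Ck_cstrip k g \<Longrightarrow> Ck_cstrip k (\<lambda>p. f p + g p)"
proof (induction k arbitrary: f g)
  case 0
  then show ?case by (auto intro: continuous_on_add)
next
  case (Suc k)
  show ?case
  proof (rule Ck_cstrip_SucI)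
    show "Ck_cstrip k (\<lambda>p. Dx f p + Dx g p)" "Ck_cstrip k (\<lambda>p. Dy f p + Dy g p)"
      using Suc by simp_all
  qed (use Suc.prems Ck_cstrip_continuous in \<open>auto intro!: derivative_intros continuous_on_add
         has_Dx_derivative has_Dy_derivative\<close>)
qed

lemma Ck_cstrip_mult: "Ck_cstrip k f \<Longrightarrow> Ck_cstrip k g \<Longrightarrow> Ck_cstrip k (\<lambda>p. f p * g p)"
proof (induction k arbitrary: f g)
  case 0
  then show ?case by (auto intro: continuous_on_mult)
next
  case (Suc k)
  have "Ck_cstrip k f" "Ck_cstrip k g" using Suc.prems by (auto intro: Ck_cstrip_Suc_imp)
  then have "Ck_cstrip k (\<lambda>p. Dx f p * g p + f p * Dx g p)" "Ck_cstrip k (\<lambda>p. Dy f p * g p + f p * Dy g p)"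
    using Suc by (auto intro!: Ck_cstrip_add)
  then show ?case
    by (rule Ck_cstrip_SucI[rotated 3])
       (use Suc.prems Ck_cstrip_continuous in \<open>auto intro!: derivative_eq_intros continuous_on_mult
          has_Dx_derivative has_Dy_derivative\<close>)
qed

lemma Ck_cstrip_minus: "Ck_cstrip k f \<Longrightarrow> Ck_cstrip k (\<lambda>p. - f p)"
  using Ck_cstrip_mult[OF Ck_cstrip_const[of k "-1"], of f] by simp

lemma Ck_cstrip_diff: "Ck_cstrip k f \<Longrightarrow> Ck_cstrip k g \<Longrightarrow> Ck_cstrip k (\<lambda>p. f p - g p)"
  using Ck_cstrip_add[OF _ Ck_cstrip_minus, of k f g] by simp

lemma Ck_cstrip_inverse:
  "Ck_cstrip k f \<Longrightarrow> (\<And>p. p \<in> cstrip \<Longrightarrow> f p \<noteq> 0) \<Longrightarrow> Ck_cstrip k (\<lambda>p. 1 / f p)"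
proof (induction k arbitrary: f)
  case 0
  then show ?case by (auto intro!: continuous_on_divide continuous_on_const)
next
  case (Suc k)
  have inv: "Ck_cstrip k (\<lambda>p. 1 / f p)"
    using Suc.IH[of f] Ck_cstrip_Suc_imp[OF Suc.prems(1)] Suc.prems(2) by blast
  have D: "Ck_cstrip k (Dx f)" "Ck_cstrip k (Dy f)"
    using Suc.prems(1) by simp_all
  have "Ck_cstrip k (\<lambda>p. - Dx f p * (1 / f p) * (1 / f p))"
    "Ck_cstrip k (\<lambda>p. - Dy f p * (1 / f p) * (1 / f p))"
    by (rule Ck_cstrip_mult[OF Ck_cstrip_mult[OF Ck_cstrip_minus[OF D(1)] inv] inv],
        rule Ck_cstrip_mult[OF Ck_cstrip_mult[OF Ck_cstrip_minus[OF D(2)] inv] inv])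
  then show ?case
    by (rule Ck_cstrip_SucI[rotated 3])
       (use Suc.prems Ck_cstrip_continuous in \<open>auto intro!: derivative_eq_intros continuous_on_divide
          continuous_on_const has_Dx_derivative has_Dy_derivative simp: power2_eq_square\<close>)
qed

lemma Ck_cstrip_divide:
  "Ck_cstrip k f \<Longrightarrow> Ck_cstrip k g \<Longrightarrow> (\<And>p. p \<in> cstrip \<Longrightarrow> g p \<noteq> 0) \<Longrightarrow> Ck_cstrip k (\<lambda>p. f p / g p)"
  using Ck_cstrip_mult[OF _ Ck_cstrip_inverse, of k f g] by simp

lemma Ck_cstrip_SucD:
  "Ck_cstrip (Suc k) f \<Longrightarrow> Ck_cstrip k (Dx f) \<and> Ck_cstrip k (Dy f) \<and> (\<forall>p\<in>cstrip. has_Dx f p \<and> has_Dy f p)"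
  by simp

lemma Ck_cstrip_2D:
  assumes "Ck_cstrip 2 f" "p \<in> cstrip"
  shows "has_Dx f p" "has_Dy f p" "has_Dx (Dx f) p" "has_Dy (Dx f) p" "has_Dx (Dy f) p" "has_Dy (Dy f) p"
  using assms by (simp_all add: numeral_2_eq_2)

lemma pd_snoc: "pd ds (Dx f) = pd (ds @ [True]) f" "pd ds (Dy f) = pd (ds @ [False]) f"
  by (induction ds) auto

lemma Ck_cstrip_of_pd:
  "(\<forall>ds. length ds < k \<longrightarrow> (\<forall>p\<in>cstrip. has_Dx (pd ds f) p \<and> has_Dy (pd ds f) p)) \<Longrightarrow>
   (\<forall>ds. length ds \<le> k \<longrightarrow> continuous_on cstrip (pd ds f)) \<Longrightarrow> Ck_cstrip k f"
proof (induction k arbitrary: f)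
  case 0
  then show ?case by (auto dest: spec[of _ "[]"])
next
  case (Suc k)
  have "Ck_cstrip k (Dx f)" "Ck_cstrip k (Dy f)"
    by (rule Suc.IH; use Suc.prems in \<open>auto simp: pd_snoc\<close>)+
  then show ?case using Suc.prems(1)[rule_format, of "[]"] Suc.prems(2)[rule_format, of "[]"]
    by auto
qed

lemma holder_Ckb_imp_Ck_cstrip: "holder_Ckb k b f \<Longrightarrow> Ck_cstrip k f"
  unfolding holder_Ckb_def by (rule Ck_cstrip_of_pd) blast+

lemma holder_Ckb_pd_bounded: "holder_Ckb k b f \<Longrightarrow> length ds \<le> k \<Longrightarrow> \<exists>B. \<forall>z\<in>cstrip. \<bar>pd ds f z\<bar> \<le> B"
  unfolding holder_Ckb_def bounded_iff by (metis image_eqI real_norm_def)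

declare Ck_cstrip.simps(2)[simp del]

lemma mixed_partials_meet_in_square:
  assumes f: "Ck_cstrip 2 f" and t: "t > 0" and y: "0 < y" "y + t < 1"
  obtains a b a' b' where "x < a" "a < x + t" "y < b" "b < y + t" "x < a'" "a' < x + t" "y < b'" "b' < y + t"
    "Dy (Dx f) (a, b) = Dx (Dy f) (a', b')"
proof -
  have inS: "(s, r) \<in> strip" if "y \<le> r" "r \<le> y + t" for s r using that y t by (auto simp: strip_def)
  note inC = strip_cstrip[OF inS]
  note P = Ck_cstrip_2D[OF f]
  \<comment> \<open>The second difference of \<open>f\<close> over the square, by the mean value theorem in either order.\<close>
  obtain a where a: "x < a" "a < x + t" "(f (x + t, y + t) - f (x + t, y)) - (f (x, y + t) - f (x, y))
      = t * (Dx f (a, y + t) - Dx f (a, y))"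
  proof -
    have "((\<lambda>s. f (s, y + t) - f (s, y)) has_real_derivative Dx f (s, y + t) - Dx f (s, y)) (at s)" for s
      using P inC t by (intro derivative_intros has_Dx_derivative_Pair) auto
    from MVT2[of x "x + t", OF _ this] t show ?thesis using that by auto
  qed
  obtain b where b: "y < b" "b < y + t" "Dx f (a, y + t) - Dx f (a, y) = t * Dy (Dx f) (a, b)"
  proof -
    have "((\<lambda>r. Dx f (a, r)) has_real_derivative Dy (Dx f) (a, r)) (at r)" if "y \<le> r" "r \<le> y + t" for r
      using P inS inC that by (intro has_Dy_derivative_at_Pair) auto
    from MVT2[of y "y + t", OF _ this] t show ?thesis using that by auto
  qed
  obtain b' where b': "y < b'" "b' < y + t" "(f (x + t, y + t) - f (x, y + t)) - (f (x + t, y) - f (x, y))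
      = t * (Dy f (x + t, b') - Dy f (x, b'))"
  proof -
    have "((\<lambda>r. f (x + t, r) - f (x, r)) has_real_derivative Dy f (x + t, r) - Dy f (x, r)) (at r)"
      if "y \<le> r" "r \<le> y + t" for r
      using P inS inC that by (intro derivative_intros has_Dy_derivative_at_Pair) auto
    from MVT2[of y "y + t", OF _ this] t show ?thesis using that by auto
  qed
  obtain a' where a': "x < a'" "a' < x + t" "Dy f (x + t, b') - Dy f (x, b') = t * Dx (Dy f) (a', b')"
  proof -
    have "((\<lambda>s. Dy f (s, b')) has_real_derivative Dx (Dy f) (s, b')) (at s)" for s
      using P inC b' by (intro has_Dx_derivative_Pair) auto
    from MVT2[of x "x + t", OF _ this] t show ?thesis using that by auto
  qed
  have "t * (t * Dy (Dx f) (a, b)) = t * (t * Dx (Dy f) (a', b'))"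
    using a(3) b(3) b'(3) a'(3) by (simp add: algebra_simps)
  then show ?thesis using that a b a' b' t by simp
qed

lemma Dy_Dx_commute:
  assumes f: "Ck_cstrip 2 f" and z: "z \<in> strip"
  shows "Dy (Dx f) z = Dx (Dy f) z"
proof (rule ccontr)
  define A where "A = Dy (Dx f)"
  define B where "B = Dx (Dy f)"
  define e where "e = \<bar>A z - B z\<bar> / 2"
  assume "Dy (Dx f) z \<noteq> Dx (Dy f) z"
  then have e: "e > 0" by (simp add: e_def A_def B_def)
  obtain x y where zxy: "z = (x, y)" by fastforce
  have y01: "0 < y" "y < 1" using z zxy by (auto simp: strip_def)
  have cont: "continuous_on cstrip A" "continuous_on cstrip B"
    using f by (simp_all add: A_def B_def numeral_2_eq_2 Ck_cstrip.simps(2))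
  obtain dA where dA: "dA > 0" "\<And>w. w \<in> cstrip \<Longrightarrow> dist w z < dA \<Longrightarrow> dist (A w) (A z) < e"
    using cont(1) strip_cstrip[OF z] e unfolding continuous_on_iff by metis
  obtain dB where dB: "dB > 0" "\<And>w. w \<in> cstrip \<Longrightarrow> dist w z < dB \<Longrightarrow> dist (B w) (B z) < e"
    using cont(2) strip_cstrip[OF z] e unfolding continuous_on_iff by metis
  define t where "t = min (min dA dB / 2) ((1 - y) / 2)"
  have t1: "t \<le> (1 - y) / 2" "t \<le> min dA dB / 2" unfolding t_def by linarith+
  have t: "t > 0" "y + t < 1" using dA dB y01 t1 by (auto simp: t_def)
  have near: "(a, b) \<in> cstrip \<and> dist (a, b) z < min dA dB"
    if "x \<le> a" "a \<le> x + t" "y \<le> b" "b \<le> y + t" for a b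
  proof
    show "(a, b) \<in> cstrip" using that y01 t by (auto simp: cstrip_def)
    have "dist (a, b) z = sqrt ((a - x)^2 + (b - y)^2)"
      by (simp add: zxy dist_Pair_Pair dist_real_def)
    also have "\<dots> \<le> sqrt (t^2 + t^2)" using that t
      by (intro real_sqrt_le_mono add_mono power_mono) auto
    also have "\<dots> = sqrt 2 * t" using t by (simp add: real_sqrt_mult)
    also have "\<dots> < 2 * t" using t by (intro mult_strict_right_mono) (auto simp: real_less_lsqrt)
    also have "\<dots> \<le> min dA dB" using t1 by linarith
    finally show "dist (a, b) z < min dA dB" .
  qed
  obtain a b a' b'
    where ab: "x < a" "a < x + t" "y < b" "b < y + t" "x < a'" "a' < x + t" "y < b'" "b' < y + t"
    and AB: "A (a, b) = B (a', b')"
    using mixed_partials_meet_in_square[OF f t(1) y01(1) t(2), of x] unfolding A_def B_def by blast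
  have "dist (A (a, b)) (A z) < e" "dist (B (a', b')) (B z) < e"
    using ab near[of a b] near[of a' b'] by (auto intro!: dA(2) dB(2))
  then have "\<bar>A z - B z\<bar> < 2 * e" using AB by (simp add: dist_real_def)
  then show False by (simp add: e_def)
qed

lemma second_deriv_nonpos_at_local_max:
  fixes f f' :: "real \<Rightarrow> real"
  assumes r: "r > 0"
    and d1: "\<And>t. x0 - r < t \<Longrightarrow> t < x0 + r \<Longrightarrow> (f has_real_derivative f' t) (at t)"
    and d2: "(f' has_real_derivative f2) (at x0)"
    and mx: "\<And>t. x0 - r < t \<Longrightarrow> t < x0 + r \<Longrightarrow> f t \<le> f x0"
  shows "f2 \<le> 0"
proof (rule ccontr)
  assume "\<not> f2 \<le> 0"
  then have f2: "f2 > 0" by simp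
  have f'0: "f' x0 = 0"
    by (rule DERIV_local_max[OF d1[of x0] r]) (use r mx in \<open>auto simp: abs_less_iff\<close>)
  have "((\<lambda>y. (f' y - f' x0) / (y - x0)) \<longlongrightarrow> f2) (at x0)"
    using d2 by (simp add: has_field_derivative_iff)
  from order_tendstoD(1)[OF this, of 0] f2
  have "\<forall>\<^sub>F y in at x0. 0 < (f' y - f' x0) / (y - x0)" by simp
  then obtain d where d: "d > 0" "\<And>y. y \<noteq> x0 \<Longrightarrow> dist y x0 < d \<Longrightarrow> 0 < f' y / (y - x0)"
    unfolding eventually_at using f'0 by auto
  define t1 where "t1 = x0 + min d r / 2"
  have t1: "x0 < t1" "t1 < x0 + r" "t1 - x0 < d" using d r by (auto simp: t1_def)
  have "\<And>s. x0 \<le> s \<Longrightarrow> s \<le> t1 \<Longrightarrow> (f has_real_derivative f' s) (at s)"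
    using t1 r by (intro d1) auto
  from MVT2[OF t1(1) this] obtain s where s: "x0 < s" "s < t1" "f t1 - f x0 = (t1 - x0) * f' s"
    by blast
  have "0 < f' s / (s - x0)" using d(2)[of s] s t1 by (auto simp: dist_real_def)
  then have "f' s > 0" using s by (simp add: zero_less_divide_iff)
  then have "f t1 - f x0 > 0" using s t1 by simp
  moreover have "f t1 \<le> f x0" using mx[of t1] t1 r by auto
  ultimately show False by simp
qed

lemma zero_deriv_below_sloped_parabola:
  fixes f :: "real \<Rightarrow> real"
  assumes der: "(f has_real_derivative 0) (at t0 within S)" and f0: "f t0 = 0"
    and n: "n \<noteq> 0" and k: "\<kappa> > 0" and dl: "\<delta> > 0"
    and bnd: "\<And>t. 0 < \<bar>t\<bar> \<Longrightarrow> \<bar>t\<bar> < \<delta> \<Longrightarrow> t * n < 0 \<Longrightarrow> t0 + t \<in> S \<and> f (t0 + t) \<le> \<kappa> * t * (2 * n + t)"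
  shows False
proof -
  have "((\<lambda>y. (f y - f t0) / (y - t0)) \<longlongrightarrow> 0) (at t0 within S)"
    using der by (simp add: has_field_derivative_iff)
  then have "\<forall>\<^sub>F y in at t0 within S. \<bar>(f y - f t0) / (y - t0)\<bar> < \<kappa> * \<bar>n\<bar>"
  proof -
    assume a: "((\<lambda>y. (f y - f t0) / (y - t0)) \<longlongrightarrow> 0) (at t0 within S)"
    have "\<kappa> * \<bar>n\<bar> > 0" using k n by simp
    from tendstoD[OF a this] show ?thesis by (simp add: dist_real_def)
  qed
  then obtain d where d: "d > 0" "\<And>y. y \<in> S \<Longrightarrow> y \<noteq> t0 \<Longrightarrow> dist y t0 < d \<Longrightarrow> \<bar>f y / (y - t0)\<bar> < \<kappa> * \<bar>n\<bar>"
    unfolding eventually_at using f0 by auto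
  define m where "m = min d (min \<delta> \<bar>n\<bar>) / 2"
  have m: "m > 0" "m < d" "m < \<delta>" "m < \<bar>n\<bar>" using d dl n by (auto simp: m_def)
  define t where "t = (if n > 0 then - m else m)"
  have t: "0 < \<bar>t\<bar>" "\<bar>t\<bar> < \<delta>" "t * n < 0" "\<bar>t\<bar> < d" "\<bar>t\<bar> < \<bar>n\<bar>"
    using m n by (auto simp: t_def mult_neg_pos mult_pos_neg)
  from bnd[OF t(1-3)] have S: "t0 + t \<in> S" and fb: "f (t0 + t) \<le> \<kappa> * t * (2 * n + t)" by auto
  have lt: "\<bar>f (t0 + t) / t\<bar> < \<kappa> * \<bar>n\<bar>" using d(2)[OF S] t by (auto simp: dist_real_def)
  show False
  proof (cases "n > 0")
    case True
    then have tn: "t < 0" "t > - n" using t m by (auto simp: t_def)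
    have "f (t0 + t) / t \<ge> \<kappa> * (2 * n + t)"
      using fb tn by (simp add: le_divide_eq mult.commute mult.left_commute)
    moreover have "\<kappa> * (2 * n + t) \<ge> \<kappa> * n" using k tn by (intro mult_left_mono) auto
    ultimately have "f (t0 + t) / t \<ge> \<kappa> * \<bar>n\<bar>" using True by simp
    then show False using lt abs_ge_self[of "f (t0 + t) / t"] by linarith
  next
    case False
    then have n0: "n < 0" using n by simp
    then have tn: "t > 0" "t < - n" using t m by (auto simp: t_def)
    have "f (t0 + t) / t \<le> \<kappa> * (2 * n + t)"
      using fb tn by (simp add: divide_le_eq mult.commute mult.left_commute)
    moreover have "\<kappa> * (2 * n + t) \<le> \<kappa> * n" using k tn by (intro mult_left_mono) auto
    ultimately have "f (t0 + t) / t \<le> - (\<kappa> * \<bar>n\<bar>)" using n0 by simp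
    then show False using lt abs_ge_minus_self[of "f (t0 + t) / t"] by linarith
  qed
qed

lemma large_exponent:
  fixes K R :: real
  assumes K: "K > 0" and R: "R > 0"
  obtains lam where "lam > 0" "4 * lam + K \<le> lam^2 * R^2"
proof
  define lam where "lam = max 1 ((4 + K) / R^2)"
  have lam: "lam \<ge> 1" "lam * R^2 \<ge> 4 + K"
    using R K by (auto simp: lam_def max_def field_simps)
  then show "lam > 0" by simp
  have "4 * lam + K \<le> lam * (4 + K)" using lam K by (simp add: algebra_simps)
  also have "\<dots> \<le> lam^2 * R^2" using lam mult_left_mono[OF lam(2), of lam]
    by (simp add: power2_eq_square)
  finally show "4 * lam + K \<le> lam^2 * R^2" .
qed

lemma dist_Pair_sqrt: "dist (s, t) (x1, y1) = sqrt ((s - x1)^2 + (t - y1)^2)"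
  by (simp add: dist_Pair_Pair dist_real_def)

lemma dist_Pair_less_iff_sq:
  assumes r: "r > 0"
  shows "dist (s, t) (x1, y1) < r \<longleftrightarrow> (s - x1)^2 + (t - y1)^2 < r^2"
proof -
  have "r = sqrt (r^2)" using r by simp
  then have "dist (s, t) (x1, y1) < r \<longleftrightarrow> sqrt ((s - x1)^2 + (t - y1)^2) < sqrt (r^2)"
    by (simp add: dist_Pair_sqrt)
  also have "\<dots> \<longleftrightarrow> (s - x1)^2 + (t - y1)^2 < r^2" by (rule real_sqrt_less_iff)
  finally show ?thesis .
qed

lemma dist_Pair_le_iff_sq:
  assumes r: "r > 0"
  shows "dist (s, t) (x1, y1) \<le> r \<longleftrightarrow> (s - x1)^2 + (t - y1)^2 \<le> r^2"
proof -
  have "r = sqrt (r^2)" using r by simp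
  then have "dist (s, t) (x1, y1) \<le> r \<longleftrightarrow> sqrt ((s - x1)^2 + (t - y1)^2) \<le> sqrt (r^2)"
    by (simp add: dist_Pair_sqrt)
  also have "\<dots> \<longleftrightarrow> (s - x1)^2 + (t - y1)^2 \<le> r^2" by (rule real_sqrt_le_iff)
  finally show ?thesis .
qed

lemma annulus_shift:
  fixes n m d t \<kappa> :: real
  assumes nm: "n^2 + m^2 = d^2" and d: "d > 0" and tn: "t * n < 0"
    and t1: "\<bar>t\<bar> < \<bar>n\<bar>" and t2: "\<bar>t\<bar> < 3 * d / 8"
  shows "d^2/4 \<le> (n + t)^2 + m^2" "(n + t)^2 + m^2 \<le> d^2"
    "- \<kappa> * (d^2 - ((n + t)^2 + m^2)) = \<kappa> * t * (2 * n + t)"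
proof -
  have e: "(n + t)^2 + m^2 = d^2 + 2 * t * n + t^2" using nm
    by (simp add: power2_eq_square algebra_simps)
  have "n^2 \<le> d^2" using nm zero_le_power2[of m] by linarith
  then have an: "\<bar>n\<bar> \<le> d" using d abs_le_square_iff[of n d] by simp
  have tnabs: "t * n = - (\<bar>t\<bar> * \<bar>n\<bar>)" using tn by (simp add: abs_mult[symmetric])
  have "t^2 = \<bar>t\<bar> * \<bar>t\<bar>" by (simp add: power2_eq_square abs_mult[symmetric])
  also have "\<dots> \<le> \<bar>t\<bar> * \<bar>n\<bar>" using t1 by (intro mult_left_mono) auto
  finally have tt: "t^2 \<le> \<bar>t\<bar> * \<bar>n\<bar>" .
  show "(n + t)^2 + m^2 \<le> d^2" using e tt tnabs mult_nonneg_nonneg[of "\<bar>t\<bar>" "\<bar>n\<bar>"] by linarith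
  have "\<bar>t\<bar> * \<bar>n\<bar> \<le> \<bar>t\<bar> * d" using an by (intro mult_left_mono) auto
  also have "\<dots> \<le> (3 * d / 8) * d" using t2 d by (intro mult_right_mono) auto
  finally have "\<bar>t\<bar> * \<bar>n\<bar> \<le> 3 * d^2 / 8" by (simp add: power2_eq_square)
  then show "d^2/4 \<le> (n + t)^2 + m^2" using e tnabs zero_le_power2[of t] by linarith
  show "- \<kappa> * (d^2 - ((n + t)^2 + m^2)) = \<kappa> * t * (2 * n + t)"
  proof -
    have q: "d^2 - ((n + t)^2 + m^2) = - (2 * t * n + t^2)" unfolding e by simp
    show ?thesis unfolding q by (simp add: power2_eq_square algebra_simps)
  qed
qed

lemma R_plus_eq_Times: "R_plus = {0<..} \<times> {0<..<1}" by (auto simp: R_plus_def)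
lemma open_R_plus: "open R_plus" unfolding R_plus_eq_Times
  by (intro open_Times open_greaterThan open_greaterThanLessThan)
lemma R_plus_subset_strip: "R_plus \<subseteq> strip" by (auto simp: R_plus_def strip_def)
lemma R_plus_subset_cstrip: "R_plus \<subseteq> cstrip" by (auto simp: R_plus_def cstrip_def)

lemma closure_strip: "closure strip = cstrip"
proof -
  have "strip = UNIV \<times> {0<..<(1::real)}" by (auto simp: strip_def)
  moreover have "cstrip = UNIV \<times> {0..(1::real)}" by (auto simp: cstrip_def)
  ultimately show ?thesis
    using closure_Times[of "UNIV::real set" "{0<..<(1::real)}"] closure_greaterThanLessThan[of "0::real" 1]
    by simp
qed

lemma continuous_ge_on_cstrip:
  fixes f :: "real \<times> real \<Rightarrow> real"
  shows "continuous_on cstrip f \<Longrightarrow> (\<And>z. z \<in> strip \<Longrightarrow> a \<le> f z) \<Longrightarrow> z \<in> cstrip \<Longrightarrow> a \<le> f z"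
  using continuous_ge_on_closure[of strip f z a] by (simp add: closure_strip)

lemma continuous_constant_on_cstrip:
  fixes f :: "real \<times> real \<Rightarrow> 'a::t1_space"
  shows "continuous_on cstrip f \<Longrightarrow> (\<And>z. z \<in> strip \<Longrightarrow> f z = a) \<Longrightarrow> z \<in> cstrip \<Longrightarrow> f z = a"
  using continuous_constant_on_closure[of strip f a z] by (simp add: closure_strip)

section \<open>Maximum principles for \<open>Delta v = c v\<close> with \<open>c \<ge> 0\<close>\<close>

locale lap_eq_nonneg_potential =
  fixes v c :: "real \<times> real \<Rightarrow> real"
  assumes v_smooth: "Ck_cstrip 2 v"
    and lap_v_eq: "\<And>z. z \<in> strip \<Longrightarrow> Dx (Dx v) z + Dy (Dy v) z = c z * v z"
    and c_nonneg: "\<And>z. z \<in> strip \<Longrightarrow> c z \<ge> 0"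
    and c_continuous: "continuous_on cstrip c"
begin

lemma v_continuous: "continuous_on cstrip v" using Ck_cstrip_continuous[OF v_smooth] .

lemma v_partials: "\<And>p. p \<in> cstrip \<Longrightarrow> has_Dx v p" "\<And>p. p \<in> cstrip \<Longrightarrow> has_Dy v p"
  "\<And>p. p \<in> cstrip \<Longrightarrow> has_Dx (Dx v) p" "\<And>p. p \<in> cstrip \<Longrightarrow> has_Dy (Dy v) p"
  using Ck_cstrip_2D[OF v_smooth] by auto

lemma local_max_second_order_test:
  fixes \<phi> :: "real \<times> real \<Rightarrow> real"
  assumes U: "open U" "U \<subseteq> strip" "(x, y) \<in> U"
    and phx: "\<And>s. ((\<lambda>s. \<phi> (s, y)) has_real_derivative \<phi>x s) (at s)"
    and phxx: "(\<phi>x has_real_derivative \<phi>xx) (at x)"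
    and phy: "\<And>t. ((\<lambda>t. \<phi> (x, t)) has_real_derivative \<phi>y t) (at t)"
    and phyy: "(\<phi>y has_real_derivative \<phi>yy) (at y)"
    and mx: "\<And>w. w \<in> U \<Longrightarrow> v w + \<phi> w \<le> v (x, y) + \<phi> (x, y)"
  shows "c (x, y) * v (x, y) + \<phi>xx + \<phi>yy \<le> 0"
proof -
  obtain r where r: "r > 0" "ball (x, y) r \<subseteq> U" using U open_contains_ball by blast
  have inU1: "(t, y) \<in> U" if "x - r < t" "t < x + r" for t
    using that r by (intro subsetD[OF r(2)]) (auto simp: dist_Pair_Pair dist_real_def)
  have inU2: "(x, t) \<in> U" if "y - r < t" "t < y + r" for t
    using that r by (intro subsetD[OF r(2)]) (auto simp: dist_Pair_Pair dist_real_def)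
  have xy: "(x, y) \<in> strip" using U by auto
  have A: "Dx (Dx v) (x, y) + \<phi>xx \<le> 0"
  proof (rule second_deriv_nonpos_at_local_max[OF r(1)])
    show "((\<lambda>s. v (s, y) + \<phi> (s, y)) has_real_derivative Dx v (s, y) + \<phi>x s) (at s)" for s
      using xy by (intro derivative_intros phx has_Dx_derivative_Pair v_partials)
        (auto simp: strip_def cstrip_def)
    show "((\<lambda>s. Dx v (s, y) + \<phi>x s) has_real_derivative Dx (Dx v) (x, y) + \<phi>xx) (at x)"
      using xy by (intro derivative_intros phxx has_Dx_derivative_Pair v_partials strip_cstrip)
    show "v (t, y) + \<phi> (t, y) \<le> v (x, y) + \<phi> (x, y)" if "x - r < t" "t < x + r" for t
      using mx inU1 that by blast
  qed
  have B: "Dy (Dy v) (x, y) + \<phi>yy \<le> 0"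
  proof (rule second_deriv_nonpos_at_local_max[OF r(1)])
    show "((\<lambda>t. v (x, t) + \<phi> (x, t)) has_real_derivative Dy v (x, t) + \<phi>y t) (at t)"
      if "y - r < t" "t < y + r" for t
      using inU2[OF that] U
        by (intro derivative_intros phy has_Dy_derivative_at_Pair v_partials strip_cstrip) auto
    show "((\<lambda>t. Dy v (x, t) + \<phi>y t) has_real_derivative Dy (Dy v) (x, y) + \<phi>yy) (at y)"
      using xy by (intro derivative_intros phyy has_Dy_derivative_at_Pair v_partials strip_cstrip)
    show "v (x, t) + \<phi> (x, t) \<le> v (x, y) + \<phi> (x, y)" if "y - r < t" "t < y + r" for t
      using mx inU2 that by blast
  qed
  show ?thesis using A B lap_v_eq[OF xy] by linarith
qed

lemma penalized_max_nonpos: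
  assumes bx0: "\<And>y. 0 \<le> y \<Longrightarrow> y \<le> 1 \<Longrightarrow> v (0, y) \<le> 0"
    and by0: "\<And>x. x \<ge> 0 \<Longrightarrow> v (x, 0) \<le> 0" and by1: "\<And>x. x \<ge> 0 \<Longrightarrow> v (x, 1) \<le> 0"
    and bdd: "\<And>z. z \<in> cstrip \<Longrightarrow> v z \<le> M"
    and e: "\<epsilon> > 0" and X: "M < \<epsilon> * (X + 1)"
    and xy: "(x, y) \<in> {0..X} \<times> {0..1}"
  shows "v (x, y) + \<epsilon> * (y^2 - 2 - x) \<le> 0"
proof (rule ccontr)
  define W where "W = (\<lambda>z. v z + \<epsilon> * ((snd z)^2 - 2 - fst z))"
  define K where "K = {0..X} \<times> {0..(1::real)}"
  assume "\<not> v (x, y) + \<epsilon> * (y^2 - 2 - x) \<le> 0"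
  then have Wxy: "W (x, y) > 0" by (simp add: W_def)
  have KS: "K \<subseteq> cstrip" by (auto simp: K_def cstrip_def)
  have "continuous_on K W" unfolding W_def
    by (intro continuous_intros continuous_on_subset[OF v_continuous KS])
  then obtain xm ym where zm: "(xm, ym) \<in> K" "\<And>w. w \<in> K \<Longrightarrow> W w \<le> W (xm, ym)"
    using continuous_attains_sup[of K W] xy by (auto simp: K_def compact_Times)
  have Wzm: "W (xm, ym) > 0" using zm(2) xy Wxy by (fastforce simp: K_def)
  have W_le: "W (a, b) \<le> v (a, b) - \<epsilon> * (1 + a)" if "(a, b) \<in> K" for a b
  proof -
    have "b^2 \<le> 1" using that by (simp add: K_def power_le_one)
    then show ?thesis using e by (simp add: W_def algebra_simps)
  qed
  have edge: "v (a, b) < \<epsilon> * (1 + a)" if "(a, b) \<in> K" "a = 0 \<or> b = 0 \<or> b = 1 \<or> a = X" for a b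
  proof -
    have pos: "\<epsilon> * (1 + a) > 0" using that e by (simp add: K_def)
    show ?thesis
    proof (cases "a = X")
      case True
      then show ?thesis using that KS bdd[of "(a, b)"] X by (auto simp: algebra_simps)
    next
      case False
      then have "v (a, b) \<le> 0" using that bx0[of b] by0[of a] by1[of a] by (auto simp: K_def)
      then show ?thesis using pos by linarith
    qed
  qed
  have inner: "0 < xm" "xm < X" "0 < ym" "ym < 1"
    using edge[of xm ym] W_le[of xm ym] zm(1) Wzm by (fastforce simp: K_def)+
  define U where "U = {0<..<X} \<times> {0<..<(1::real)}"
  have U: "open U" "U \<subseteq> strip" "(xm, ym) \<in> U" using inner
    by (auto simp: U_def strip_def intro!: open_Times)
  \<comment> \<open>The penalty has Laplacian \<open>2 \<epsilon> > 0\<close>, which no interior maximum can accommodate.\<close>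
  have T: "c (xm, ym) * v (xm, ym) + 0 + 2 * \<epsilon> \<le> 0"
  proof (rule local_max_second_order_test[OF U, where \<phi> = "\<lambda>z. \<epsilon> * ((snd z)^2 - 2 - fst z)"])
    show "((\<lambda>s. \<epsilon> * ((snd (s, ym))\<^sup>2 - 2 - fst (s, ym))) has_real_derivative - \<epsilon>) (at s)" for s
      by (auto intro!: derivative_eq_intros)
    show "((\<lambda>t. \<epsilon> * ((snd (xm, t))\<^sup>2 - 2 - fst (xm, t))) has_real_derivative 2 * \<epsilon> * t) (at t)" for t
      by (auto intro!: derivative_eq_intros)
    show "v w + \<epsilon> * ((snd w)\<^sup>2 - 2 - fst w) \<le> v (xm, ym) + \<epsilon> * ((snd (xm, ym))\<^sup>2 - 2 - fst (xm, ym))"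
      if "w \<in> U" for w using zm(2)[of w] that by (auto simp: W_def U_def K_def)
  qed (auto intro!: derivative_eq_intros)
  have "v (xm, ym) > 0" using W_le[OF zm(1)] Wzm e inner by (smt (verit) mult_pos_pos)
  then have "c (xm, ym) * v (xm, ym) \<ge> 0" using c_nonneg[of "(xm, ym)"] U by auto
  then show False using T e by linarith
qed

lemma weak_max_half_strip:
  assumes bx0: "\<And>y. 0 \<le> y \<Longrightarrow> y \<le> 1 \<Longrightarrow> v (0, y) \<le> 0"
    and by0: "\<And>x. x \<ge> 0 \<Longrightarrow> v (x, 0) \<le> 0" and by1: "\<And>x. x \<ge> 0 \<Longrightarrow> v (x, 1) \<le> 0"
    and bdd: "\<And>z. z \<in> cstrip \<Longrightarrow> v z \<le> M"
    and xy: "x \<ge> 0" "0 \<le> y" "y \<le> 1"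
  shows "v (x, y) \<le> 0"
proof (rule ccontr)
  assume "\<not> v (x, y) \<le> 0"
  then have vpos: "v (x, y) > 0" by simp
  define \<epsilon> where "\<epsilon> = v (x, y) / (2 * (x + 3))"
  define X where "X = x + \<bar>M\<bar> / \<epsilon>"
  have e: "\<epsilon> > 0" using vpos xy by (simp add: \<epsilon>_def)
  have "M < \<epsilon> * (X + 1)"
    using e xy by (simp add: X_def algebra_simps) (smt (verit) mult_nonneg_nonneg abs_ge_self)
  moreover have "(x, y) \<in> {0..X} \<times> {0..1}" using xy e by (simp add: X_def)
  ultimately have "v (x, y) + \<epsilon> * (y^2 - 2 - x) \<le> 0"
    using penalized_max_nonpos[OF bx0 by0 by1 bdd e] by blast
  moreover have "\<epsilon> * (x + 3) = v (x, y) / 2" using xy by (simp add: \<epsilon>_def field_simps)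
  moreover have "\<epsilon> * (- (x + 3)) \<le> \<epsilon> * (y^2 - 2 - x)"
    using e zero_le_power2[of y] by (intro mult_left_mono) auto
  ultimately show False using vpos by linarith
qed

lemma radial_barrier_max_test:
  assumes U: "open U" "U \<subseteq> strip" "(xm, ym) \<in> U"
    and mx: "\<And>s t. (s, t) \<in> U \<Longrightarrow> v (s, t) + \<epsilon> * (exp (- lam * ((s - x1)^2 + (t - y1)^2)) - C) \<le>
               v (xm, ym) + \<epsilon> * (exp (- lam * ((xm - x1)^2 + (ym - y1)^2)) - C)"
  shows "c (xm, ym) * v (xm, ym) + \<epsilon> * exp (- lam * ((xm - x1)^2 + (ym - y1)^2)) *
           (4 * lam^2 * ((xm - x1)^2 + (ym - y1)^2) - 4 * lam) \<le> 0"
proof -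
  define E where "E = exp (- lam * ((xm - x1)^2 + (ym - y1)^2))"
  have "c (xm, ym) * v (xm, ym) + \<epsilon> * E * (4 * lam^2 * (xm - x1)^2 - 2 * lam)
           + \<epsilon> * E * (4 * lam^2 * (ym - y1)^2 - 2 * lam) \<le> 0"
  proof (rule local_max_second_order_test[OF U,
        where \<phi> = "\<lambda>w. \<epsilon> * (exp (- lam * ((fst w - x1)^2 + (snd w - y1)^2)) - C)"])
    show "((\<lambda>s. \<epsilon> * (exp (- lam * ((fst (s, ym) - x1)^2 + (snd (s, ym) - y1)^2)) - C)) has_real_derivative
        - 2 * \<epsilon> * lam * (s - x1) * exp (- lam * ((s - x1)^2 + (ym - y1)^2))) (at s)" for s
      by (auto intro!: derivative_eq_intros simp: algebra_simps power2_eq_square)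
    show "((\<lambda>s. - 2 * \<epsilon> * lam * (s - x1) * exp (- lam * ((s - x1)^2 + (ym - y1)^2))) has_real_derivative
        \<epsilon> * E * (4 * lam^2 * (xm - x1)^2 - 2 * lam)) (at xm)"
      unfolding E_def by (auto intro!: derivative_eq_intros simp: algebra_simps power2_eq_square)
    show "((\<lambda>t. \<epsilon> * (exp (- lam * ((fst (xm, t) - x1)^2 + (snd (xm, t) - y1)^2)) - C)) has_real_derivative
        - 2 * \<epsilon> * lam * (t - y1) * exp (- lam * ((xm - x1)^2 + (t - y1)^2))) (at t)" for t
      by (auto intro!: derivative_eq_intros simp: algebra_simps power2_eq_square)
    show "((\<lambda>t. - 2 * \<epsilon> * lam * (t - y1) * exp (- lam * ((xm - x1)^2 + (t - y1)^2))) has_real_derivative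
        \<epsilon> * E * (4 * lam^2 * (ym - y1)^2 - 2 * lam)) (at ym)"
      unfolding E_def by (auto intro!: derivative_eq_intros simp: algebra_simps power2_eq_square)
  qed (use mx in auto)
  then show ?thesis by (simp add: E_def algebra_simps)
qed

lemma hopf_comparison:
  assumes ballS: "\<And>s t. (s - x1)^2 + (t - y1)^2 < R^2 \<Longrightarrow> (s, t) \<in> strip"
    and cbS: "\<And>s t. (s - x1)^2 + (t - y1)^2 \<le> R^2 \<Longrightarrow> (s, t) \<in> cstrip"
    and nonpos: "\<And>s t. (s - x1)^2 + (t - y1)^2 \<le> R^2 \<Longrightarrow> v (s, t) \<le> 0"
    and e: "\<epsilon> > 0" and inner: "\<And>s t. (s - x1)^2 + (t - y1)^2 = R^2/4 \<Longrightarrow> v (s, t) \<le> - \<epsilon>"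
    and K: "\<And>s t. (s - x1)^2 + (t - y1)^2 \<le> R^2 \<Longrightarrow> c (s, t) \<le> K"
    and lam: "lam > 0" "4 * lam + K \<le> lam^2 * R^2"
    and st: "R^2/4 \<le> (s - x1)^2 + (t - y1)^2" "(s - x1)^2 + (t - y1)^2 \<le> R^2"
  shows "v (s, t) + \<epsilon> * (exp (- lam * ((s - x1)^2 + (t - y1)^2)) - exp (- lam * R^2)) \<le> 0"
proof (rule ccontr)
  define \<rho> where "\<rho> = (\<lambda>z::real \<times> real. (fst z - x1)^2 + (snd z - y1)^2)"
  define h where "h = (\<lambda>z. exp (- lam * \<rho> z) - exp (- lam * R^2))"
  define W where "W = (\<lambda>z. v z + \<epsilon> * h z)"
  define A where "A = {z. R^2/4 \<le> \<rho> z} \<inter> {z. \<rho> z \<le> R^2}"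
  have \<rho>c: "continuous_on S \<rho>" for S unfolding \<rho>_def by (intro continuous_intros)
  have "A \<subseteq> cball (x1, y1) \<bar>R\<bar>"
  proof
    fix z assume "z \<in> A"
    then have "sqrt (\<rho> z) \<le> sqrt (R^2)" by (intro real_sqrt_le_mono) (simp add: A_def)
    then show "z \<in> cball (x1, y1) \<bar>R\<bar>"
      by (cases z) (simp add: \<rho>_def dist_Pair_Pair dist_real_def power2_commute)
  qed
  then have "bounded A" by (rule bounded_subset[OF bounded_cball])
  moreover have "closed A" unfolding A_def
    by (intro closed_Int closed_Collect_le \<rho>c continuous_on_const)
  ultimately have "compact A" by (simp add: compact_eq_bounded_closed)
  moreover have "continuous_on A W" unfolding W_def h_def
    by (intro continuous_intros continuous_on_subset[OF v_continuous] \<rho>c)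
       (use cbS in \<open>auto simp: A_def \<rho>_def\<close>)
  moreover assume "\<not> v (s, t) + \<epsilon> * (exp (- lam * ((s - x1)^2 + (t - y1)^2)) - exp (- lam * R^2)) \<le> 0"
  then have "(s, t) \<in> A" "W (s, t) > 0" using st by (auto simp: A_def W_def h_def \<rho>_def)
  ultimately obtain zm where zm: "zm \<in> A" "\<And>w. w \<in> A \<Longrightarrow> W w \<le> W zm"
    using continuous_attains_sup[of A W] by blast
  obtain xm ym where zmxy: "zm = (xm, ym)" by fastforce
  have Wzm: "W zm > 0" using zm(2)[OF \<open>(s, t) \<in> A\<close>] \<open>W (s, t) > 0\<close> by simp
  have "exp (- lam * \<rho> zm) \<le> 1" using lam zm(1) by (simp add: A_def \<rho>_def)
  then have "h zm < 1" using exp_gt_zero[of "- lam * R^2"] unfolding h_def by linarith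
  then have "\<epsilon> * h zm < \<epsilon>" using e by simp
  moreover have "v zm \<le> - \<epsilon>" if "\<rho> zm = R^2/4" using inner[of xm ym] that by (simp add: zmxy \<rho>_def)
  ultimately have "\<rho> zm \<noteq> R^2/4" using Wzm unfolding W_def by fastforce
  moreover have "\<rho> zm \<noteq> R^2" using nonpos[of xm ym] Wzm by (auto simp: W_def h_def zmxy \<rho>_def)
  ultimately have inn: "R^2/4 < \<rho> zm" "\<rho> zm < R^2" using zm(1) by (auto simp: A_def)
  define U where "U = {z. R^2/4 < \<rho> z} \<inter> {z. \<rho> z < R^2}"
  have U: "open U" "U \<subseteq> strip" "(xm, ym) \<in> U"
    unfolding U_def using inn ballS
      by (auto simp: zmxy \<rho>_def intro!: open_Int open_Collect_less continuous_intros)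
  define E where "E = exp (- lam * \<rho> zm)"
  have T: "c zm * v zm + \<epsilon> * E * (4 * lam^2 * \<rho> zm - 4 * lam) \<le> 0"
    using radial_barrier_max_test[OF U, of \<epsilon> lam x1 y1 "exp (- lam * R^2)"] zm(2)
    by (auto simp: E_def zmxy \<rho>_def U_def A_def W_def h_def)
  have hE: "0 \<le> h zm" "h zm \<le> E" using inn lam by (auto simp: h_def E_def)
  have czm: "0 \<le> c zm" "c zm \<le> K" using c_nonneg[of zm] U K[of xm ym] inn by (auto simp: zmxy \<rho>_def)
  have "c zm * v zm \<ge> c zm * (- \<epsilon> * h zm)"
    using czm Wzm by (intro mult_left_mono) (auto simp: W_def)
  moreover have "c zm * (\<epsilon> * h zm) \<le> K * (\<epsilon> * E)"
    using czm hE e by (intro mult_mono) auto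
  ultimately have cv: "c zm * v zm \<ge> - (K * \<epsilon> * E)" by (simp add: algebra_simps)
  \<comment> \<open>\<open>lam\<close> is chosen so large that the barrier is a strict subsolution of \<open>\<Delta> - c\<close> on the annulus.\<close>
  have "lam^2 * R^2 < lam^2 * (4 * \<rho> zm)" using lam(1) inn(1) by (intro mult_strict_left_mono) auto
  then have "4 * lam^2 * \<rho> zm - 4 * lam - K > 0" using lam(2) by (simp add: algebra_simps)
  then have "\<epsilon> * E * (4 * lam^2 * \<rho> zm - 4 * lam - K) > 0" using e by (simp add: E_def)
  then show False using T cv by (simp add: algebra_simps)
qed

lemma hopf_barrier:
  assumes R: "R > 0"
    and ballS: "\<And>s t. (s - x1)^2 + (t - y1)^2 < R^2 \<Longrightarrow> (s, t) \<in> strip"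
    and cbS: "\<And>s t. (s - x1)^2 + (t - y1)^2 \<le> R^2 \<Longrightarrow> (s, t) \<in> cstrip"
    and neg: "\<And>s t. (s - x1)^2 + (t - y1)^2 < R^2 \<Longrightarrow> v (s, t) < 0"
    and nonpos: "\<And>s t. (s - x1)^2 + (t - y1)^2 \<le> R^2 \<Longrightarrow> v (s, t) \<le> 0"
  obtains \<kappa> where "\<kappa> > 0" "\<And>s t. R^2/4 \<le> (s - x1)^2 + (t - y1)^2 \<Longrightarrow> (s - x1)^2 + (t - y1)^2 \<le> R^2 \<Longrightarrow>
            v (s, t) \<le> - \<kappa> * (R^2 - ((s - x1)^2 + (t - y1)^2))"
proof -
  define B where "B = (\<lambda>r. {z. (fst z - x1)^2 + (snd z - y1)^2 \<le> r^2})"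
  have B: "B r = cball (x1, y1) r" if "r > 0" for r
    using dist_Pair_le_iff_sq[OF that] by (auto simp: B_def dist_commute)
  have BS: "B R \<subseteq> cstrip" using cbS by (auto simp: B_def)
  have "B (R/2) \<subseteq> B R"
  proof
    fix z assume "z \<in> B (R/2)"
    moreover have "(R/2)^2 \<le> R^2" by (simp add: power_divide)
    ultimately show "z \<in> B R" by (simp add: B_def)
  qed
  then obtain zi where zi: "zi \<in> B (R/2)" "\<And>w. w \<in> B (R/2) \<Longrightarrow> v w \<le> v zi"
    using continuous_attains_sup[of "B (R/2)" v] B[of "R/2"] R
      continuous_on_subset[OF v_continuous subset_trans[OF _ BS]]
    by (metis compact_cball empty_iff centre_in_cball less_imp_le half_gt_zero)
  define \<epsilon> where "\<epsilon> = - v zi"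
  have "(fst zi - x1)^2 + (snd zi - y1)^2 \<le> R^2/4" using zi(1) by (simp add: B_def power_divide)
  moreover have "R^2/4 < R^2" using R by simp
  ultimately have "(fst zi - x1)^2 + (snd zi - y1)^2 < R^2" by linarith
  then have e: "\<epsilon> > 0" using neg[of "fst zi" "snd zi"] by (simp add: \<epsilon>_def)
  have "compact (c ` B R)" unfolding B[OF R]
    by (intro compact_continuous_image continuous_on_subset[OF c_continuous])
      (use BS B[OF R] in auto)
  then obtain K where K: "K > 0" "\<And>z. z \<in> B R \<Longrightarrow> norm (c z) \<le> K"
    using compact_imp_bounded bounded_pos by (metis imageI)
  obtain lam where lam: "lam > 0" and lamK: "4 * lam + K \<le> lam^2 * R^2"
    using large_exponent[OF K(1) R] .
  define \<kappa> where "\<kappa> = \<epsilon> * lam * exp (- lam * R^2)"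
  show ?thesis
  proof (rule that)
    show "\<kappa> > 0" using e lam by (simp add: \<kappa>_def)
    fix s t
    define r where "r = (s - x1)^2 + (t - y1)^2"
    assume st: "R^2/4 \<le> (s - x1)^2 + (t - y1)^2" "(s - x1)^2 + (t - y1)^2 \<le> R^2"
    have W0: "v (s, t) + \<epsilon> * (exp (- lam * r) - exp (- lam * R^2)) \<le> 0"
      unfolding r_def
    proof (rule hopf_comparison[OF ballS cbS nonpos e _ _ lam lamK st])
      show "v (a, b) \<le> - \<epsilon>" if "(a - x1)^2 + (b - y1)^2 = R^2/4" for a b
        using zi(2)[of "(a, b)"] that by (simp add: \<epsilon>_def B_def power_divide)
      show "c (a, b) \<le> K" if "(a - x1)^2 + (b - y1)^2 \<le> R^2" for a b
        using K(2)[of "(a, b)"] that by (simp add: B_def)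
    qed
    \<comment> \<open>Convexity of \<open>exp\<close> turns the barrier into a linear lower bound in \<open>R^2 - r\<close>.\<close>
    have "exp (- lam * r) = exp (- lam * R^2) * exp (lam * (R^2 - r))"
      by (simp add: exp_add[symmetric] algebra_simps)
    also have "\<dots> \<ge> exp (- lam * R^2) * (1 + lam * (R^2 - r))"
      by (intro mult_left_mono exp_ge_add_one_self) simp
    finally have "\<epsilon> * (exp (- lam * R^2) * (lam * (R^2 - r))) \<le> \<epsilon> * (exp (- lam * r) - exp (- lam * R^2))"
      using e by (intro mult_left_mono) (auto simp: algebra_simps)
    then show "v (s, t) \<le> - \<kappa> * (R^2 - ((s - x1)^2 + (t - y1)^2))"
      using W0 by (simp add: \<kappa>_def r_def algebra_simps)
  qed
qed

lemma partials_zero_at_max: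
  assumes z: "(a, b) \<in> R_plus" and mx: "\<And>w. w \<in> R_plus \<Longrightarrow> v w \<le> v (a, b)"
  shows "((\<lambda>s. v (s, b)) has_real_derivative 0) (at a)" "((\<lambda>t. v (a, t)) has_real_derivative 0) (at b)"
proof -
  obtain r where r: "r > 0" "ball (a, b) r \<subseteq> R_plus" using open_R_plus z open_contains_ball by blast
  have zs: "(a, b) \<in> strip" "(a, b) \<in> cstrip" using z R_plus_subset_strip R_plus_subset_cstrip
    by auto
  have dx: "((\<lambda>s. v (s, b)) has_real_derivative Dx v (a, b)) (at a)"
    using zs by (intro has_Dx_derivative_Pair v_partials)
  have dy: "((\<lambda>t. v (a, t)) has_real_derivative Dy v (a, b)) (at b)"
    using zs by (intro has_Dy_derivative_at_Pair v_partials)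
  have "Dx v (a, b) = 0"
  proof (rule DERIV_local_max[OF dx r(1)], intro allI impI)
    fix s assume "\<bar>a - s\<bar> < r"
    then have "(s, b) \<in> R_plus"
      using r by (intro subsetD[OF r(2)])
        (auto simp: dist_Pair_Pair dist_real_def abs_minus_commute)
    then show "v (s, b) \<le> v (a, b)" by (rule mx)
  qed
  then show "((\<lambda>s. v (s, b)) has_real_derivative 0) (at a)" using dx by simp
  have "Dy v (a, b) = 0"
  proof (rule DERIV_local_max[OF dy r(1)], intro allI impI)
    fix t assume "\<bar>b - t\<bar> < r"
    then have "(a, t) \<in> R_plus"
      using r by (intro subsetD[OF r(2)])
        (auto simp: dist_Pair_Pair dist_real_def abs_minus_commute)
    then show "v (a, t) \<le> v (a, b)" by (rule mx)
  qed
  then show "((\<lambda>t. v (a, t)) has_real_derivative 0) (at b)" using dy by simp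
qed

lemma hopf_interior:
  assumes nonpos: "\<And>w. w \<in> R_plus \<Longrightarrow> v w \<le> 0" and d: "d > 0"
    and ballR: "\<And>s t. (s - x1)^2 + (t - y1)^2 \<le> d^2 \<Longrightarrow> (s, t) \<in> R_plus"
    and neg: "\<And>s t. (s - x1)^2 + (t - y1)^2 < d^2 \<Longrightarrow> v (s, t) < 0"
    and sphere: "(a - x1)^2 + (b - y1)^2 = d^2" and vz: "v (a, b) = 0"
  shows False
proof -
  obtain \<kappa> where k: "\<kappa> > 0" and kin: "\<And>s t. d^2/4 \<le> (s - x1)^2 + (t - y1)^2 \<Longrightarrow>
      (s - x1)^2 + (t - y1)^2 \<le> d^2 \<Longrightarrow> v (s, t) \<le> - \<kappa> * (d^2 - ((s - x1)^2 + (t - y1)^2))"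
  proof (rule hopf_barrier[OF d])
    fix s t
    assume "(s - x1)^2 + (t - y1)^2 \<le> d^2"
    then show "(s, t) \<in> cstrip" "v (s, t) \<le> 0"
      using ballR nonpos R_plus_subset_cstrip by auto
  next
    fix s t
    assume "(s - x1)^2 + (t - y1)^2 < d^2"
    then show "(s, t) \<in> strip" "v (s, t) < 0"
      using ballR[of s t] neg R_plus_subset_strip by auto
  qed blast
  have "(a, b) \<in> R_plus" using ballR sphere by simp
  note deriv0 = partials_zero_at_max[OF this, unfolded vz, OF nonpos]
  \<comment> \<open>At least one coordinate of the outer normal is nonzero; move along it.\<close>
  show False
  proof (cases "a - x1 = 0")
    case False
    show False
    proof (rule zero_deriv_below_sloped_parabola[OF has_field_derivative_at_within[OF deriv0(1)] vz False k])
      show "min \<bar>a - x1\<bar> (3 * d / 8) > 0" using False d by simp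
      fix t assume t: "0 < \<bar>t\<bar>" "\<bar>t\<bar> < min \<bar>a - x1\<bar> (3 * d / 8)" "t * (a - x1) < 0"
      note st = annulus_shift[OF sphere d t(3)] t(2)
      have "v (a + t, b) \<le> - \<kappa> * (d^2 - (((a + t) - x1)^2 + (b - y1)^2))"
        by (rule kin) (use st in \<open>auto simp: algebra_simps\<close>)
      also have "\<dots> = \<kappa> * t * (2 * (a - x1) + t)"
        using st by (simp add: algebra_simps)
      finally show "a + t \<in> UNIV \<and> v (a + t, b) \<le> \<kappa> * t * (2 * (a - x1) + t)" by simp
    qed
  next
    case True
    then have nb: "b - y1 \<noteq> 0" using sphere d by auto
    have sphere': "(b - y1)^2 + (a - x1)^2 = d^2" using sphere by simp
    show False
    proof (rule zero_deriv_below_sloped_parabola[OF has_field_derivative_at_within[OF deriv0(2)] vz nb k])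
      show "min \<bar>b - y1\<bar> (3 * d / 8) > 0" using nb d by simp
      fix t assume t: "0 < \<bar>t\<bar>" "\<bar>t\<bar> < min \<bar>b - y1\<bar> (3 * d / 8)" "t * (b - y1) < 0"
      note st = annulus_shift[OF sphere' d t(3)] t(2)
      have "v (a, b + t) \<le> - \<kappa> * (d^2 - ((a - x1)^2 + ((b + t) - y1)^2))"
        by (rule kin) (use st in \<open>auto simp: algebra_simps\<close>)
      also have "\<dots> = \<kappa> * t * (2 * (b - y1) + t)"
        using st by (simp add: algebra_simps)
      finally show "b + t \<in> UNIV \<and> v (a, b + t) \<le> \<kappa> * t * (2 * (b - y1) + t)" by simp
    qed
  qed
qed

lemma open_zero_set_R_plus:
  assumes nonpos: "\<And>w. w \<in> R_plus \<Longrightarrow> v w \<le> 0"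
  shows "open {z \<in> R_plus. v z = 0}"
  unfolding open_contains_ball
proof
  fix z0 assume "z0 \<in> {z \<in> R_plus. v z = 0}"
  then have z0R: "z0 \<in> R_plus" and vz0: "v z0 = 0" by auto
  obtain r where r: "r > 0" "ball z0 r \<subseteq> R_plus" using open_R_plus z0R open_contains_ball by blast
  have cbR: "cball z0 (r/2) \<subseteq> R_plus" using r by (intro subset_trans[OF _ r(2)]) auto
  have "v z1 = 0" if z1b: "z1 \<in> ball z0 (r/4)" for z1
  proof (rule ccontr)
    assume vz1: "v z1 \<noteq> 0"
    \<comment> \<open>The largest disc around \<open>z1\<close> free of zeros of \<open>v\<close> touches a zero at an interior point.\<close>
    define Zc where "Zc = {w \<in> cball z0 (r/2). v w = 0}"
    have "closed Zc" unfolding Zc_def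
      by (intro continuous_closed_preimage_constant continuous_on_subset[OF v_continuous] closed_cball)
         (use cbR R_plus_subset_cstrip in auto)
    moreover have "z0 \<in> Zc" using vz0 r by (auto simp: Zc_def)
    ultimately obtain z' where z': "z' \<in> Zc" "\<And>w. w \<in> Zc \<Longrightarrow> dist z1 z' \<le> dist z1 w"
      using distance_attains_inf by blast
    define d where "d = dist z1 z'"
    have dlt: "d < r/4" using z'(2)[OF \<open>z0 \<in> Zc\<close>] z1b by (simp add: d_def dist_commute)
    have dpos: "d > 0" using z'(1) vz1 by (auto simp: Zc_def d_def)
    obtain x1 y1 where z1: "z1 = (x1, y1)" by fastforce
    obtain a b where z'ab: "z' = (a, b)" by fastforce
    have inc: "w \<in> cball z0 (r/2)" if "dist w z1 \<le> d" for w
      using dist_triangle[of z0 w z1] z1b that dlt by (simp add: dist_commute)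
    show False
    proof (rule hopf_interior[OF nonpos dpos])
      show "(s, t) \<in> R_plus" if "(s - x1)^2 + (t - y1)^2 \<le> d^2" for s t
        using inc[of "(s, t)"] dist_Pair_le_iff_sq[OF dpos, of s t x1 y1] that z1 cbR by auto
      show "v (s, t) < 0" if st: "(s - x1)^2 + (t - y1)^2 < d^2" for s t
      proof -
        have near: "dist (s, t) z1 < d" using dist_Pair_less_iff_sq[OF dpos, of s t x1 y1] st z1
          by simp
        then have "(s, t) \<notin> Zc" using z'(2) by (force simp: d_def dist_commute)
        then have "v (s, t) \<noteq> 0" using inc[of "(s, t)"] near by (auto simp: Zc_def)
        moreover have "(s, t) \<in> R_plus" using inc[of "(s, t)"] near cbR by auto
        ultimately show ?thesis using nonpos by force
      qed
      show "(a - x1)^2 + (b - y1)^2 = d^2"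
        using dist_Pair_sqrt[of a b x1 y1] dpos by (simp add: d_def z1 z'ab dist_commute)
      show "v (a, b) = 0" using z'(1) by (simp add: Zc_def z'ab)
    qed
  qed
  then show "\<exists>e>0. ball z0 e \<subseteq> {z \<in> R_plus. v z = 0}"
    using r by (intro exI[of _ "r/4"]) auto
qed

lemma strong_max_R_plus:
  assumes nonpos: "\<And>w. w \<in> R_plus \<Longrightarrow> v w \<le> 0"
  shows "(\<forall>z\<in>R_plus. v z < 0) \<or> (\<forall>z\<in>R_plus. v z = 0)"
proof -
  define Z where "Z = {z \<in> R_plus. v z = 0}"
  have "connected R_plus" unfolding R_plus_eq_Times
    by (intro convex_connected convex_Times convex_real_interval)
  moreover have "openin (top_of_set R_plus) Z"
    using open_zero_set_R_plus[OF nonpos] by (simp add: openin_open_eq Z_def open_R_plus)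
  moreover have "closedin (top_of_set R_plus) Z" unfolding Z_def
    by (intro continuous_closedin_preimage_constant
        continuous_on_subset[OF v_continuous R_plus_subset_cstrip])
  ultimately have "Z = {} \<or> Z = R_plus" unfolding connected_clopen by blast
  then show ?thesis using nonpos by (auto simp: Z_def less_le)
qed

lemma hopf_Gamma_plus:
  assumes nonpos: "\<And>x y. x \<ge> 0 \<Longrightarrow> 0 \<le> y \<Longrightarrow> y \<le> 1 \<Longrightarrow> v (x, y) \<le> 0"
    and neg: "\<And>z. z \<in> R_plus \<Longrightarrow> v z < 0"
    and x0: "x0 > 0" and v0: "v (x0, 1) = 0"
  shows "Dy v (x0, 1) \<noteq> 0"
proof
  assume dy0: "Dy v (x0, 1) = 0"
  \<comment> \<open>A disc of radius \<open>R\<close> inside \<open>R_plus\<close> touching the top at \<open>(x0, 1)\<close>.\<close>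
  define R where "R = min x0 (1/2) / 2"
  have R: "R > 0" "R \<le> x0 / 2" "R \<le> 1/4" using x0 by (auto simp: R_def)
  have sq_bound: "\<bar>s - x0\<bar> \<le> R \<and> \<bar>t - (1 - R)\<bar> \<le> R" if "(s - x0)^2 + (t - (1 - R))^2 \<le> R^2" for s t
  proof -
    have "(s - x0)^2 \<le> R^2" "(t - (1 - R))^2 \<le> R^2"
      using that zero_le_power2[of "s - x0"] zero_le_power2[of "t - (1 - R)"] by linarith+
    then show ?thesis using R(1) by (simp add: abs_le_square_iff[symmetric])
  qed
  have sq_bound': "\<bar>s - x0\<bar> < R \<and> \<bar>t - (1 - R)\<bar> < R" if "(s - x0)^2 + (t - (1 - R))^2 < R^2" for s t
  proof -
    have "\<not> R^2 \<le> (s - x0)^2" "\<not> R^2 \<le> (t - (1 - R))^2"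
      using that zero_le_power2[of "s - x0"] zero_le_power2[of "t - (1 - R)"] by linarith+
    then show ?thesis using R(1) by (simp add: abs_le_square_iff[symmetric])
  qed
  obtain \<kappa> where k: "\<kappa> > 0" and kin: "\<And>s t. R^2/4 \<le> (s - x0)^2 + (t - (1 - R))^2 \<Longrightarrow>
      (s - x0)^2 + (t - (1 - R))^2 \<le> R^2 \<Longrightarrow> v (s, t) \<le> - \<kappa> * (R^2 - ((s - x0)^2 + (t - (1 - R))^2))"
  proof (rule hopf_barrier[OF R(1), of x0 "1 - R"])
    fix s t
    show "(s, t) \<in> strip" "v (s, t) < 0" if "(s - x0)^2 + (t - (1 - R))^2 < R^2"
      using sq_bound'[OF that] R neg[of "(s, t)"] by (auto simp: strip_def R_plus_def abs_less_iff)
    show "(s, t) \<in> cstrip" "v (s, t) \<le> 0" if "(s - x0)^2 + (t - (1 - R))^2 \<le> R^2"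
      using sq_bound[OF that] R nonpos[of s t] by (auto simp: cstrip_def)
  qed blast
  have der: "((\<lambda>t. v (x0, t)) has_real_derivative 0) (at 1 within {0..1})"
    using has_Dy_derivative[OF v_partials(2), of "(x0, 1)"] dy0 by (simp add: cstrip_def)
  have "R \<noteq> 0" using R by simp
  then show False
  proof (rule zero_deriv_below_sloped_parabola[OF der v0 _ k])
    show "3 * R / 8 > 0" using R by simp
    fix t assume t: "0 < \<bar>t\<bar>" "\<bar>t\<bar> < 3 * R / 8" "t * R < 0"
    have tneg: "t < 0" using t R by (simp add: mult_less_0_iff)
    have "R^2 + 0^2 = R^2" by simp
    note st = annulus_shift[OF this R(1) t(3)] t(2)
    have "v (x0, 1 + t) \<le> - \<kappa> * (R^2 - ((x0 - x0)^2 + ((1 + t) - (1 - R))^2))"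
      by (rule kin) (use st R t in \<open>auto simp: algebra_simps\<close>)
    also have "\<dots> = \<kappa> * t * (2 * R + t)" using st R t by (simp add: algebra_simps)
    finally show "1 + t \<in> {0..1} \<and> v (x0, 1 + t) \<le> \<kappa> * t * (2 * R + t)"
      using tneg t R by auto
  qed
qed

end

section \<open>The conformal velocity of a solution\<close>

lemma rotation_system_solve:
  fixes a b X Y G :: real
  assumes e1: "a * X + b * Y = - G * (a^2 + b^2)" and e2: "a * Y - b * X = 0" and nz: "a^2 + b^2 \<noteq> 0"
  shows "X = - G * a" "Y = - G * b"
proof -
  have "(a^2 + b^2) * X = a * (a * X + b * Y) - b * (a * Y - b * X)"
    by (simp add: algebra_simps power2_eq_square)
  also have "\<dots> = (a^2 + b^2) * (- G * a)" unfolding e1 e2 by (simp add: algebra_simps)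
  finally have h: "(a^2 + b^2) * X = (a^2 + b^2) * (- G * a)" .
  show "X = - G * a" using mult_left_cancel[OF nz] h by blast
  have "(a^2 + b^2) * Y = b * (a * X + b * Y) + a * (a * Y - b * X)"
    by (simp add: algebra_simps power2_eq_square)
  also have "\<dots> = (a^2 + b^2) * (- G * b)" unfolding e1 e2 by (simp add: algebra_simps)
  finally have h: "(a^2 + b^2) * Y = (a^2 + b^2) * (- G * b)" .
  show "Y = - G * b" using mult_left_cancel[OF nz] h by blast
qed

lemma gradsq_eq_mult: "gradsq f p = Dx f p * Dx f p + Dy f p * Dy f p"
  by (simp add: gradsq_def power2_eq_square)

lemma frame_decomposition:
  fixes P Q a b D :: real
  assumes D: "D = a * a + b * b" "D \<noteq> 0"
  shows "P = (P * a + Q * b) / D * a - (Q * a - P * b) / D * b"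
    "Q = (P * a + Q * b) / D * b + (Q * a - P * b) / D * a"
proof -
  have n1: "(P * a + Q * b) * a - (Q * a - P * b) * b = P * D" using D(1)
    by (simp add: algebra_simps)
  have "(P * a + Q * b) / D * a - (Q * a - P * b) / D * b = ((P * a + Q * b) * a - (Q * a - P * b) * b) / D"
    using D(2) by (simp add: field_simps)
  also have "\<dots> = P" unfolding n1 using D(2) by simp
  finally show "P = (P * a + Q * b) / D * a - (Q * a - P * b) / D * b" by simp
  have n2: "(P * a + Q * b) * b + (Q * a - P * b) * a = Q * D" using D(1)
    by (simp add: algebra_simps)
  have "(P * a + Q * b) / D * b + (Q * a - P * b) / D * a = ((P * a + Q * b) * b + (Q * a - P * b) * a) / D"
    using D(2) by (simp add: field_simps)
  also have "\<dots> = Q" unfolding n2 using D(2) by simp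
  finally show "Q = (P * a + Q * b) / D * b + (Q * a - P * b) / D * a" by simp
qed

lemma frame_norm_identity:
  fixes P Q a b D :: real
  assumes D: "D = a * a + b * b" "D \<noteq> 0"
  shows "((P * a + Q * b) / D)^2 + ((Q * a - P * b) / D)^2 = (P^2 + Q^2) / D"
proof -
  have "(P * a + Q * b)^2 + (Q * a - P * b)^2 = (P^2 + Q^2) * D" using D(1)
    by (simp add: power2_eq_square algebra_simps)
  then show ?thesis using D(2)
    by (simp add: power_divide add_divide_distrib[symmetric] power2_eq_square)
qed

locale conformal_wave =
  fixes g :: "real \<Rightarrow> real" and \<mu> \<alpha> \<beta> c0 :: real and \<psi> \<eta> :: "real \<times> real \<Rightarrow> real"
  assumes g_differentiable: "\<And>x. g differentiable at x"
    and deriv_g_differentiable: "\<And>x. deriv g differentiable at x"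
    and deriv_g_nonpos: "\<And>s. deriv g s \<le> 0"
    and W1: "\<And>z. z \<in> strip \<Longrightarrow> lap \<psi> z = - g (\<psi> z) * gradsq \<eta> z"
    and W2a: "\<And>x. \<psi> (x, 1) = 1" and W2b: "\<And>x. \<psi> (x, 0) = 0"
    and W3: "\<And>x. (Dy \<psi> (x, 1))^2 = (\<mu> - 2 * \<alpha> * (\<eta> (x, 1) - 1)) * gradsq \<eta> (x, 1)"
    and W4a: "\<And>z. z \<in> strip \<Longrightarrow> lap \<eta> z = 0" and W4b: "\<And>x. \<eta> (x, 0) = 0"
    and H\<psi>: "holder_Ckb 3 \<beta> \<psi>" and H\<eta>: "holder_Ckb 3 \<beta> \<eta>"
    and W7: "\<And>x y. 0 \<le> y \<Longrightarrow> y \<le> 1 \<Longrightarrow> \<psi> (-x, y) = \<psi> (x, y) \<and> \<eta> (-x, y) = \<eta> (x, y)"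
    and c0: "c0 > 0" and W8: "\<And>z. z \<in> strip \<Longrightarrow> (\<mu> - 2 * \<alpha> * (\<eta> z - 1)) * gradsq \<eta> z \<ge> c0"
begin

text \<open>The horizontal velocity, companion of \<open>vvel\<close>: \<open>grad psi = u grad eta + v (grad eta)\<^sup>\<bottom>\<close>.\<close>

definition "u = (\<lambda>z. (Dx \<psi> z * Dx \<eta> z + Dy \<psi> z * Dy \<eta> z) / gradsq \<eta> z)"
abbreviation "v \<equiv> vvel \<psi> \<eta>"
definition "bernoulli_factor = (\<lambda>z. \<mu> - 2 * \<alpha> * (\<eta> z - 1))"

lemma Ck3: "Ck_cstrip 3 \<psi>" "Ck_cstrip 3 \<eta>"
  using holder_Ckb_imp_Ck_cstrip[OF H\<psi>] holder_Ckb_imp_Ck_cstrip[OF H\<eta>] .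

lemma Ck2_partials: "Ck_cstrip 2 (Dx \<psi>)" "Ck_cstrip 2 (Dy \<psi>)" "Ck_cstrip 2 (Dx \<eta>)" "Ck_cstrip 2 (Dy \<eta>)"
proof -
  have "Ck_cstrip (Suc 2) \<psi>" "Ck_cstrip (Suc 2) \<eta>" using Ck3 by simp_all
  then show "Ck_cstrip 2 (Dx \<psi>)" "Ck_cstrip 2 (Dy \<psi>)" "Ck_cstrip 2 (Dx \<eta>)" "Ck_cstrip 2 (Dy \<eta>)"
    using Ck_cstrip_SucD by blast+
qed

lemma Ck2: "Ck_cstrip 2 \<psi>" "Ck_cstrip 2 \<eta>" using Ck_cstrip_mono[OF Ck3(1)] Ck_cstrip_mono[OF Ck3(2)]
  by auto

lemma Ck2_gradsq: "Ck_cstrip 2 (gradsq \<eta>)" unfolding gradsq_def[abs_def] power2_eq_square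
  by (intro Ck_cstrip_add Ck_cstrip_mult Ck2_partials)

lemma continuous_parts: "continuous_on cstrip \<psi>" "continuous_on cstrip \<eta>" "continuous_on cstrip (Dx \<psi>)"
  "continuous_on cstrip (Dy \<psi>)" "continuous_on cstrip (Dx \<eta>)" "continuous_on cstrip (Dy \<eta>)"
  "continuous_on cstrip (gradsq \<eta>)"
  using Ck_cstrip_continuous Ck2 Ck2_partials Ck2_gradsq by blast+

lemma partials_exist: "\<And>z. z \<in> cstrip \<Longrightarrow> has_Dx \<psi> z" "\<And>z. z \<in> cstrip \<Longrightarrow> has_Dy \<psi> z"
  "\<And>z. z \<in> cstrip \<Longrightarrow> has_Dx \<eta> z" "\<And>z. z \<in> cstrip \<Longrightarrow> has_Dy \<eta> z"
  using Ck_cstrip_2D[OF Ck2(1)] Ck_cstrip_2D[OF Ck2(2)] by auto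

lemma gradsq_lower_bound: "\<exists>\<delta>>0. \<forall>z\<in>cstrip. gradsq \<eta> z \<ge> \<delta>"
proof -
  obtain B where B: "\<And>z. z \<in> cstrip \<Longrightarrow> \<bar>\<eta> z\<bar> \<le> B" using holder_Ckb_pd_bounded[OF H\<eta>, of "[]"] by auto
  define KL where "KL = \<bar>\<mu>\<bar> + 2 * \<bar>\<alpha>\<bar> * (\<bar>B\<bar> + 1) + 1"
  have "2 * \<bar>\<alpha>\<bar> * (\<bar>B\<bar> + 1) \<ge> 0" by simp
  then have KLp: "KL > 0" unfolding KL_def using abs_ge_zero[of \<mu>] by linarith
  have LK: "bernoulli_factor z \<le> KL" if "z \<in> cstrip" for z
  proof -
    have "\<bar>\<eta> z - 1\<bar> \<le> \<bar>B\<bar> + 1" using B[OF that] by linarith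
    then have "\<bar>\<alpha>\<bar> * \<bar>\<eta> z - 1\<bar> \<le> \<bar>\<alpha>\<bar> * (\<bar>B\<bar> + 1)" by (intro mult_left_mono) auto
    then have "- (2 * \<alpha> * (\<eta> z - 1)) \<le> 2 * (\<bar>\<alpha>\<bar> * (\<bar>B\<bar> + 1))"
      using abs_ge_minus_self[of "\<alpha> * (\<eta> z - 1)"] by (simp add: abs_mult)
    then show ?thesis by (simp add: bernoulli_factor_def KL_def)
  qed
  have Dnn: "gradsq \<eta> z \<ge> 0" for z by (simp add: gradsq_eq_mult)
  have "gradsq \<eta> z \<ge> c0 / KL" if "z \<in> strip" for z
  proof -
    have zc: "z \<in> cstrip" using that by (auto simp: strip_def cstrip_def)
    have "c0 \<le> bernoulli_factor z * gradsq \<eta> z" using W8[OF that]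
      by (simp add: bernoulli_factor_def)
    also have "\<dots> \<le> KL * gradsq \<eta> z" using LK[OF zc] Dnn by (intro mult_right_mono) auto
    finally show ?thesis using KLp by (simp add: divide_le_eq mult.commute)
  qed
  then have "\<forall>z\<in>cstrip. gradsq \<eta> z \<ge> c0 / KL" using continuous_ge_on_cstrip[OF continuous_parts(7)]
    by blast
  moreover have "c0 / KL > 0" using c0 KLp by simp
  ultimately show ?thesis by blast
qed

lemma gradsq_nonzero: "z \<in> cstrip \<Longrightarrow> gradsq \<eta> z \<noteq> 0" using gradsq_lower_bound by force

lemma bernoulli_factor_gradsq_ge: "z \<in> cstrip \<Longrightarrow> bernoulli_factor z * gradsq \<eta> z \<ge> c0"
proof -
  assume z: "z \<in> cstrip"
  have c: "continuous_on cstrip (\<lambda>z. bernoulli_factor z * gradsq \<eta> z)"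
    unfolding bernoulli_factor_def
    by (intro continuous_intros continuous_parts)
  show ?thesis by (rule continuous_ge_on_cstrip[OF c _ z])
    (use W8 in \<open>simp add: bernoulli_factor_def\<close>)
qed

lemma Ck2_u: "Ck_cstrip 2 u" unfolding u_def
  by (intro Ck_cstrip_divide Ck_cstrip_add Ck_cstrip_mult Ck2_partials Ck2_gradsq gradsq_nonzero)
lemma Ck2_v: "Ck_cstrip 2 v" unfolding vvel_def[abs_def]
  by (intro Ck_cstrip_divide Ck_cstrip_diff Ck_cstrip_mult Ck2_partials Ck2_gradsq gradsq_nonzero)

lemma grad_psi_in_frame: "z \<in> cstrip \<Longrightarrow> Dx \<psi> z = u z * Dx \<eta> z - v z * Dy \<eta> z"
  "z \<in> cstrip \<Longrightarrow> Dy \<psi> z = u z * Dy \<eta> z + v z * Dx \<eta> z"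
  using frame_decomposition[where P = "Dx \<psi> z" and Q = "Dy \<psi> z" and a = "Dx \<eta> z" and b = "Dy \<eta> z"
      and D = "gradsq \<eta> z", OF gradsq_eq_mult gradsq_nonzero[of z]]
  by (simp_all add: u_def vvel_def)

lemma partials_exist_uv: "\<And>z. z \<in> cstrip \<Longrightarrow> has_Dx u z" "\<And>z. z \<in> cstrip \<Longrightarrow> has_Dy u z"
  "\<And>z. z \<in> cstrip \<Longrightarrow> has_Dx v z" "\<And>z. z \<in> cstrip \<Longrightarrow> has_Dy v z"
  "\<And>z. z \<in> cstrip \<Longrightarrow> has_Dx (Dx \<eta>) z" "\<And>z. z \<in> cstrip \<Longrightarrow> has_Dy (Dx \<eta>) z"
  "\<And>z. z \<in> cstrip \<Longrightarrow> has_Dx (Dy \<eta>) z" "\<And>z. z \<in> cstrip \<Longrightarrow> has_Dy (Dy \<eta>) z"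
  using Ck_cstrip_2D[OF Ck2_u] Ck_cstrip_2D[OF Ck2_v] Ck_cstrip_2D[OF Ck2(2)] by auto

lemma second_partials_psi_in_frame:
  assumes z: "z \<in> strip"
  shows "Dx (Dx \<psi>) z = Dx u z * Dx \<eta> z + u z * Dx (Dx \<eta>) z - (Dx v z * Dy \<eta> z + v z * Dx (Dy \<eta>) z)"
    "Dx (Dy \<psi>) z = Dx u z * Dy \<eta> z + u z * Dx (Dy \<eta>) z + (Dx v z * Dx \<eta> z + v z * Dx (Dx \<eta>) z)"
    "Dy (Dx \<psi>) z = Dy u z * Dx \<eta> z + u z * Dy (Dx \<eta>) z - (Dy v z * Dy \<eta> z + v z * Dy (Dy \<eta>) z)"
    "Dy (Dy \<psi>) z = Dy u z * Dy \<eta> z + u z * Dy (Dy \<eta>) z + (Dy v z * Dx \<eta> z + v z * Dy (Dx \<eta>) z)"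
proof -
  obtain x y where zxy: "z = (x, y)" by fastforce
  have zs: "(x, y) \<in> strip" and zc: "(x, y) \<in> cstrip" using z strip_cstrip by (auto simp: zxy)
  have lc: "(t, y) \<in> cstrip" for t using zc by (auto simp: cstrip_def)
  show "Dx (Dx \<psi>) z = Dx u z * Dx \<eta> z + u z * Dx (Dx \<eta>) z - (Dx v z * Dy \<eta> z + v z * Dx (Dy \<eta>) z)"
  proof -
    have "Dx (Dx \<psi>) (x, y) = Dx (\<lambda>w. u w * Dx \<eta> w - v w * Dy \<eta> w) (x, y)"
      using Dx_cong[of "Dx \<psi>" "(x, y)" "\<lambda>w. u w * Dx \<eta> w - v w * Dy \<eta> w"] grad_psi_in_frame(1)[OF lc] by simp
    also have "\<dots> = Dx u z * Dx \<eta> z + u z * Dx (Dx \<eta>) z - (Dx v z * Dy \<eta> z + v z * Dx (Dy \<eta>) z)"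
      unfolding zxy by (rule Dx_eqI_Pair)
        (auto intro!: derivative_eq_intros has_Dx_derivative_Pair partials_exist_uv partials_exist zc)
    finally show ?thesis by (simp add: zxy)
  qed
  show "Dx (Dy \<psi>) z = Dx u z * Dy \<eta> z + u z * Dx (Dy \<eta>) z + (Dx v z * Dx \<eta> z + v z * Dx (Dx \<eta>) z)"
  proof -
    have "Dx (Dy \<psi>) (x, y) = Dx (\<lambda>w. u w * Dy \<eta> w + v w * Dx \<eta> w) (x, y)"
      using Dx_cong[of "Dy \<psi>" "(x, y)" "\<lambda>w. u w * Dy \<eta> w + v w * Dx \<eta> w"] grad_psi_in_frame(2)[OF lc] by simp
    also have "\<dots> = Dx u z * Dy \<eta> z + u z * Dx (Dy \<eta>) z + (Dx v z * Dx \<eta> z + v z * Dx (Dx \<eta>) z)"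
      unfolding zxy by (rule Dx_eqI_Pair)
        (auto intro!: derivative_eq_intros has_Dx_derivative_Pair partials_exist_uv partials_exist zc)
    finally show ?thesis by (simp add: zxy)
  qed
  have lc2: "t \<in> {0..1} \<Longrightarrow> (x, t) \<in> cstrip" for t by (auto simp: cstrip_def)
  show "Dy (Dx \<psi>) z = Dy u z * Dx \<eta> z + u z * Dy (Dx \<eta>) z - (Dy v z * Dy \<eta> z + v z * Dy (Dy \<eta>) z)"
  proof -
    have "Dy (Dx \<psi>) (x, y) = Dy (\<lambda>w. u w * Dx \<eta> w - v w * Dy \<eta> w) (x, y)"
      using Dy_cong[of "Dx \<psi>" "(x, y)" "\<lambda>w. u w * Dx \<eta> w - v w * Dy \<eta> w"] grad_psi_in_frame(1)[OF lc2] zc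
      by (auto simp: cstrip_def)
    also have "\<dots> = Dy u z * Dx \<eta> z + u z * Dy (Dx \<eta>) z - (Dy v z * Dy \<eta> z + v z * Dy (Dy \<eta>) z)"
      unfolding zxy by (rule Dy_eqI_Pair[OF _ zs])
        (auto intro!: derivative_eq_intros has_Dy_derivative_at_Pair partials_exist_uv partials_exist zc zs)
    finally show ?thesis by (simp add: zxy)
  qed
  show "Dy (Dy \<psi>) z = Dy u z * Dy \<eta> z + u z * Dy (Dy \<eta>) z + (Dy v z * Dx \<eta> z + v z * Dy (Dx \<eta>) z)"
  proof -
    have "Dy (Dy \<psi>) (x, y) = Dy (\<lambda>w. u w * Dy \<eta> w + v w * Dx \<eta> w) (x, y)"
      using Dy_cong[of "Dy \<psi>" "(x, y)" "\<lambda>w. u w * Dy \<eta> w + v w * Dx \<eta> w"] grad_psi_in_frame(2)[OF lc2] zc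
      by (auto simp: cstrip_def)
    also have "\<dots> = Dy u z * Dy \<eta> z + u z * Dy (Dy \<eta>) z + (Dy v z * Dx \<eta> z + v z * Dy (Dx \<eta>) z)"
      unfolding zxy by (rule Dy_eqI_Pair[OF _ zs])
        (auto intro!: derivative_eq_intros has_Dy_derivative_at_Pair partials_exist_uv partials_exist zc zs)
    finally show ?thesis by (simp add: zxy)
  qed
qed

lemma first_order_system:
  assumes z: "z \<in> strip"
  shows "Dx u z + Dy v z = - g (\<psi> z) * Dx \<eta> z" "Dy u z - Dx v z = - g (\<psi> z) * Dy \<eta> z"
proof -
  note second = second_partials_psi_in_frame[OF z]
  have harm: "Dx (Dx \<eta>) z = - Dy (Dy \<eta>) z" using W4a[OF z] by (simp add: lap_def)
  have sym: "Dy (Dx \<eta>) z = Dx (Dy \<eta>) z" by (rule Dy_Dx_commute[OF Ck2(2) z])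
  \<comment> \<open>(W1) and the symmetry of the Hessian of \<open>\<psi>\<close> give a linear system for the two combinations.\<close>
  have "Dx \<eta> z * (Dx u z + Dy v z) + Dy \<eta> z * (Dy u z - Dx v z) = Dx (Dx \<psi>) z + Dy (Dy \<psi>) z"
    unfolding second harm sym by (simp add: algebra_simps)
  also have "\<dots> = - g (\<psi> z) * ((Dx \<eta> z)^2 + (Dy \<eta> z)^2)"
    using W1[OF z] by (simp add: lap_def gradsq_def)
  finally have e1: "Dx \<eta> z * (Dx u z + Dy v z) + Dy \<eta> z * (Dy u z - Dx v z) =
      - g (\<psi> z) * ((Dx \<eta> z)^2 + (Dy \<eta> z)^2)" .
  have "Dx \<eta> z * (Dy u z - Dx v z) - Dy \<eta> z * (Dx u z + Dy v z) = Dy (Dx \<psi>) z - Dx (Dy \<psi>) z"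
    unfolding second harm sym by (simp add: algebra_simps)
  also have "\<dots> = 0" using Dy_Dx_commute[OF Ck2(1) z] by simp
  finally have e2: "Dx \<eta> z * (Dy u z - Dx v z) - Dy \<eta> z * (Dx u z + Dy v z) = 0" .
  have "(Dx \<eta> z)^2 + (Dy \<eta> z)^2 \<noteq> 0"
    using gradsq_nonzero[OF strip_cstrip[OF z]] by (simp add: gradsq_def)
  from rotation_system_solve[OF e1 e2 this]
  show "Dx u z + Dy v z = - g (\<psi> z) * Dx \<eta> z" "Dy u z - Dx v z = - g (\<psi> z) * Dy \<eta> z"
    by simp_all
qed

lemma g_has_deriv: "(g has_real_derivative deriv g s) (at s)"
  using g_differentiable DERIV_deriv_iff_real_differentiable by blast

lemma g_continuous: "continuous_on UNIV g" "continuous_on UNIV (deriv g)"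
  using g_differentiable deriv_g_differentiable
    by (auto intro!: continuous_at_imp_continuous_on differentiable_imp_continuous_within)

lemma mixed_partials_exist_u: "\<And>z. z \<in> cstrip \<Longrightarrow> has_Dx (Dy u) z" "\<And>z. z \<in> cstrip \<Longrightarrow> has_Dy (Dx u) z"
  using Ck_cstrip_2D[OF Ck2_u] by auto

lemma lap_v: assumes z: "z \<in> strip"
  shows "Dx (Dx v) z + Dy (Dy v) z = - deriv g (\<psi> z) * gradsq \<eta> z * v z"
proof -
  obtain x y where zxy: "z = (x, y)" by fastforce
  have zs: "(x, y) \<in> strip" and zc: "(x, y) \<in> cstrip" using z strip_cstrip by (auto simp: zxy)
  have ls: "(t, y) \<in> strip" for t using zs by (auto simp: strip_def)
  have VX: "Dx v w = Dy u w + g (\<psi> w) * Dy \<eta> w" if "w \<in> strip" for w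
    using first_order_system(2)[OF that] by simp
  have VY: "Dy v w = - g (\<psi> w) * Dx \<eta> w - Dx u w" if "w \<in> strip" for w
    using first_order_system(1)[OF that] by simp
  have gx: "((\<lambda>t. g (\<psi> (t, y))) has_real_derivative deriv g (\<psi> (x, y)) * Dx \<psi> (x, y)) (at x)"
    by (rule DERIV_chain2[OF g_has_deriv has_Dx_derivative_Pair[OF partials_exist(1)[OF zc]]])
  have gy: "((\<lambda>t. g (\<psi> (x, t))) has_real_derivative deriv g (\<psi> (x, y)) * Dy \<psi> (x, y)) (at y)"
    by (rule DERIV_chain2[OF g_has_deriv has_Dy_derivative_at_Pair[OF partials_exist(2)[OF zc] zs]])
  have A: "Dx (Dx v) z = Dx (Dy u) z + deriv g (\<psi> z) * Dx \<psi> z * Dy \<eta> z + g (\<psi> z) * Dx (Dy \<eta>) z"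
  proof -
    have "Dx (Dx v) (x, y) = Dx (\<lambda>w. Dy u w + g (\<psi> w) * Dy \<eta> w) (x, y)"
      using Dx_cong[of "Dx v" "(x, y)" "\<lambda>w. Dy u w + g (\<psi> w) * Dy \<eta> w"] VX[OF ls] by simp
    also have "\<dots> = Dx (Dy u) z + deriv g (\<psi> z) * Dx \<psi> z * Dy \<eta> z + g (\<psi> z) * Dx (Dy \<eta>) z"
      unfolding zxy by (rule Dx_eqI_Pair)
        (auto intro!: derivative_eq_intros has_Dx_derivative_Pair partials_exist_uv
          mixed_partials_exist_u gx zc)
    finally show ?thesis by (simp add: zxy)
  qed
  have B: "Dy (Dy v) z = - (deriv g (\<psi> z) * Dy \<psi> z * Dx \<eta> z + g (\<psi> z) * Dy (Dx \<eta>) z) - Dy (Dx u) z"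
  proof -
    have "Dy (Dy v) (x, y) = Dy (\<lambda>w. - g (\<psi> w) * Dx \<eta> w - Dx u w) (x, y)"
      using Dy_cong_open[of "Dy v" "(x, y)" "\<lambda>w. - g (\<psi> w) * Dx \<eta> w - Dx u w"] VY zs
      by (auto simp: strip_def)
    also have "\<dots> = - (deriv g (\<psi> z) * Dy \<psi> z * Dx \<eta> z + g (\<psi> z) * Dy (Dx \<eta>) z) - Dy (Dx u) z"
      unfolding zxy by (rule Dy_eqI_Pair[OF _ zs])
        (auto intro!: derivative_eq_intros has_Dy_derivative_at_Pair partials_exist_uv
          mixed_partials_exist_u gy zc zs)
    finally show ?thesis by (simp add: zxy)
  qed
  \<comment> \<open>The second derivatives of \<open>u\<close> and of \<open>eta\<close> cancel by symmetry of their Hessians.\<close>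
  have S1: "Dy (Dx u) z = Dx (Dy u) z" by (rule Dy_Dx_commute[OF Ck2_u z])
  have S2: "Dy (Dx \<eta>) z = Dx (Dy \<eta>) z" by (rule Dy_Dx_commute[OF Ck2(2) z])
  have vD: "v z * gradsq \<eta> z = Dy \<psi> z * Dx \<eta> z - Dx \<psi> z * Dy \<eta> z"
    using gradsq_nonzero[OF strip_cstrip[OF z]] by (simp add: vvel_def)
  have "Dx (Dx v) z + Dy (Dy v) z = deriv g (\<psi> z) * (Dx \<psi> z * Dy \<eta> z - Dy \<psi> z * Dx \<eta> z)"
    using A B S1 S2 by (simp add: algebra_simps)
  also have "\<dots> = - deriv g (\<psi> z) * (v z * gradsq \<eta> z)" unfolding vD by (simp add: algebra_simps)
  finally show ?thesis by (simp add: algebra_simps)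
qed

definition "potential = (\<lambda>z. - deriv g (\<psi> z) * gradsq \<eta> z)"

lemma continuous_potential: "continuous_on cstrip potential"
  unfolding potential_def
  by (intro continuous_intros continuous_parts
      continuous_on_compose2[OF g_continuous(2) continuous_parts(1)]) auto

sublocale potential_eq: lap_eq_nonneg_potential v potential
proof
  show "Ck_cstrip 2 v" by (rule Ck2_v)
  show "Dx (Dx v) z + Dy (Dy v) z = potential z * v z" if "z \<in> strip" for z
    using lap_v[OF that] by (simp add: potential_def)
  show "0 \<le> potential z" if "z \<in> strip" for z
    using deriv_g_nonpos[of "\<psi> z"] by (simp add: potential_def gradsq_eq_mult mult_nonpos_nonneg)
  show "continuous_on cstrip potential" by (rule continuous_potential)
qed

lemma Dx_boundary: "Dx \<psi> (x, 0) = 0" "Dx \<eta> (x, 0) = 0" "Dx \<psi> (x, 1) = 0"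
proof -
  have "(\<lambda>t. \<psi> (t, 0)) = (\<lambda>t. 0)" "(\<lambda>t. \<eta> (t, 0)) = (\<lambda>t. 0)" "(\<lambda>t. \<psi> (t, 1)) = (\<lambda>t. 1)"
    using W2a W2b W4b by auto
  then show "Dx \<psi> (x, 0) = 0" "Dx \<eta> (x, 0) = 0" "Dx \<psi> (x, 1) = 0"
    by (auto intro!: Dx_eqI_Pair simp del: DERIV_const intro: DERIV_const)
qed

lemma v_bottom: "v (x, 0) = 0" using Dx_boundary by (simp add: vvel_def)

lemma partials_reflect: assumes f: "f = \<psi> \<or> f = \<eta>" and y: "0 \<le> y" "y \<le> 1"
  shows "Dx f (-x, y) = - Dx f (x, y)" "Dy f (-x, y) = Dy f (x, y)"
proof -
  have ev: "f (- t, s) = f (t, s)" if "0 \<le> s" "s \<le> 1" for t s using W7[OF that] f by auto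
  have xc: "(x, y) \<in> cstrip" using y by (simp add: cstrip_def)
  have hx: "has_Dx f (x, y)" "has_Dy f (x, y)" using partials_exist[OF xc] f by auto
  have d1: "((\<lambda>t. f (t, y)) has_real_derivative Dx f (x, y)) (at x)"
    by (rule has_Dx_derivative_Pair[OF hx(1)])
  have "((\<lambda>t. f (- t, y)) has_real_derivative Dx f (x, y) * (- 1)) (at (- x))"
    by (rule DERIV_chain2[of "\<lambda>t. f (t, y)"]) (use d1 in \<open>auto intro!: derivative_eq_intros\<close>)
  moreover have "(\<lambda>t. f (- t, y)) = (\<lambda>t. f (t, y))" using ev y by auto
  ultimately have "((\<lambda>t. f (t, y)) has_real_derivative - Dx f (x, y)) (at (- x))" by simp
  then show "Dx f (-x, y) = - Dx f (x, y)" by (rule Dx_eqI_Pair)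
  show "Dy f (-x, y) = Dy f (x, y)" unfolding Dy_def
    by (rule vector_derivative_cong_eq) (use ev y in \<open>auto intro!: always_eventually\<close>)
qed

lemma v_odd: "0 \<le> y \<Longrightarrow> y \<le> 1 \<Longrightarrow> v (-x, y) = - v (x, y)"
  using partials_reflect[of \<psi> y x] partials_reflect[of \<eta> y x]
    by (simp add: vvel_def gradsq_eq_mult algebra_simps minus_divide_left)

lemma v_axis: "0 \<le> y \<Longrightarrow> y \<le> 1 \<Longrightarrow> v (0, y) = 0"
  using v_odd[of y 0] by simp

lemma v_bounded_above: "\<exists>M. \<forall>z\<in>cstrip. v z \<le> M"
proof -
  obtain BP where BP: "\<And>z. z \<in> cstrip \<Longrightarrow> \<bar>Dx \<psi> z\<bar> \<le> BP"
    using holder_Ckb_pd_bounded[OF H\<psi>, of "[True]"] by auto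
  obtain BQ where BQ: "\<And>z. z \<in> cstrip \<Longrightarrow> \<bar>Dy \<psi> z\<bar> \<le> BQ"
    using holder_Ckb_pd_bounded[OF H\<psi>, of "[False]"] by auto
  obtain Ba where Ba: "\<And>z. z \<in> cstrip \<Longrightarrow> \<bar>Dx \<eta> z\<bar> \<le> Ba"
    using holder_Ckb_pd_bounded[OF H\<eta>, of "[True]"] by auto
  obtain Bb where Bb: "\<And>z. z \<in> cstrip \<Longrightarrow> \<bar>Dy \<eta> z\<bar> \<le> Bb"
    using holder_Ckb_pd_bounded[OF H\<eta>, of "[False]"] by auto
  obtain \<delta> where d: "\<delta> > 0" "\<And>z. z \<in> cstrip \<Longrightarrow> gradsq \<eta> z \<ge> \<delta>" using gradsq_lower_bound by auto
  have "v z \<le> (BQ * Ba + BP * Bb) / \<delta>" if z: "z \<in> cstrip" for z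
  proof -
    have "\<bar>Dy \<psi> z * Dx \<eta> z - Dx \<psi> z * Dy \<eta> z\<bar> \<le> \<bar>Dy \<psi> z\<bar> * \<bar>Dx \<eta> z\<bar> + \<bar>Dx \<psi> z\<bar> * \<bar>Dy \<eta> z\<bar>"
      by (simp add: abs_mult[symmetric] abs_triangle_ineq4)
    also have "\<dots> \<le> BQ * Ba + BP * Bb"
      using BP[OF z] BQ[OF z] Ba[OF z] Bb[OF z] by (intro add_mono mult_mono) auto
    finally have num: "\<bar>Dy \<psi> z * Dx \<eta> z - Dx \<psi> z * Dy \<eta> z\<bar> \<le> BQ * Ba + BP * Bb" .
    have "v z \<le> \<bar>v z\<bar>" by simp
    also have "\<dots> = \<bar>Dy \<psi> z * Dx \<eta> z - Dx \<psi> z * Dy \<eta> z\<bar> / gradsq \<eta> z"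
      using d(2)[OF z] d(1) by (simp add: vvel_def abs_divide)
    also have "\<dots> \<le> (BQ * Ba + BP * Bb) / gradsq \<eta> z" using num d(2)[OF z] d(1)
      by (intro divide_right_mono) auto
    also have "\<dots> \<le> (BQ * Ba + BP * Bb) / \<delta>"
      using d(2)[OF z] d(1) num by (intro divide_left_mono)
        (auto intro: order_trans[OF abs_ge_zero])
    finally show ?thesis .
  qed
  then show ?thesis by blast
qed

lemma first_order_system_top:
  "Dy v (x, 1) + g (\<psi> (x, 1)) * Dx \<eta> (x, 1) + Dx u (x, 1) = 0"
proof (rule continuous_constant_on_cstrip)
  have "Ck_cstrip 1 (Dy v)" "Ck_cstrip 1 (Dx u)"
    using Ck_cstrip_SucD[of 1 v] Ck_cstrip_SucD[of 1 u] Ck2_v Ck2_u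
      by (simp_all add: numeral_2_eq_2)
  then show "continuous_on cstrip (\<lambda>z. Dy v z + g (\<psi> z) * Dx \<eta> z + Dx u z)"
    by (intro continuous_intros Ck_cstrip_continuous continuous_parts
        continuous_on_compose2[OF g_continuous(1) continuous_parts(1)]) auto
  show "Dy v z + g (\<psi> z) * Dx \<eta> z + Dx u z = 0" if "z \<in> strip" for z
    using first_order_system(1)[OF that] by simp
qed (simp add: cstrip_def)

lemma bernoulli_top: "u (x, 1)^2 + v (x, 1)^2 = bernoulli_factor (x, 1)"
proof -
  have xc: "(x, 1) \<in> cstrip" by (simp add: cstrip_def)
  have "u (x, 1)^2 + v (x, 1)^2 = ((Dx \<psi> (x, 1))^2 + (Dy \<psi> (x, 1))^2) / gradsq \<eta> (x, 1)"
    unfolding u_def vvel_def by (rule frame_norm_identity[OF gradsq_eq_mult gradsq_nonzero[OF xc]])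
  also have "\<dots> = bernoulli_factor (x, 1)"
    using W3[of x] Dx_boundary(3)[of x] gradsq_nonzero[OF xc] by (simp add: bernoulli_factor_def)
  finally show ?thesis .
qed

lemma Dy_v_zero_at_top_zero:
  assumes v0: "v (x0, 1) = 0"
  shows "Dy v (x0, 1) = 0"
proof -
  define z0 where "z0 = (x0, (1::real))"
  have zc: "z0 \<in> cstrip" by (simp add: z0_def cstrip_def)
  have "(Dy \<psi> z0)^2 = bernoulli_factor z0 * gradsq \<eta> z0" using W3[of x0]
    by (simp add: z0_def bernoulli_factor_def)
  then have "(Dy \<psi> z0)^2 \<ge> c0" using bernoulli_factor_gradsq_ge[OF zc] by simp
  then have Qnz: "Dy \<psi> z0 \<noteq> 0" using c0 by auto
  have Dnz: "gradsq \<eta> z0 \<noteq> 0" by (rule gradsq_nonzero[OF zc])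
  have "Dy \<psi> z0 * Dx \<eta> z0 / gradsq \<eta> z0 = 0" using v0 Dx_boundary(3) by (simp add: vvel_def z0_def)
  then have a0: "Dx \<eta> z0 = 0" using Qnz Dnz by simp
  \<comment> \<open>Differentiate the Bernoulli condition along the top; there \<open>\<eta>\<^sub>x = 0\<close> and \<open>v = 0\<close>.\<close>
  have "((\<lambda>t. u (t, 1)^2 + v (t, 1)^2) has_real_derivative
      2 * u z0 * Dx u z0 + 2 * v z0 * Dx v z0) (at x0)"
    unfolding z0_def
      by (auto intro!: derivative_eq_intros has_Dx_derivative_Pair partials_exist_uv simp: cstrip_def)
  moreover have "((\<lambda>t. bernoulli_factor (t, 1)) has_real_derivative - 2 * \<alpha> * Dx \<eta> z0) (at x0)"
    unfolding z0_def bernoulli_factor_def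
    by (auto intro!: derivative_eq_intros has_Dx_derivative_Pair partials_exist simp: cstrip_def)
  ultimately have "2 * u z0 * Dx u z0 + 2 * v z0 * Dx v z0 = - 2 * \<alpha> * Dx \<eta> z0"
    using DERIV_unique bernoulli_top by simp
  then have uux: "u z0 * Dx u z0 = 0" using a0 v0 by (simp add: z0_def)
  have "gradsq \<eta> z0 = (Dy \<eta> z0)^2" using a0 by (simp add: gradsq_def)
  then have "u z0 \<noteq> 0" using a0 Qnz Dnz by (simp add: u_def)
  then have "Dx u z0 = 0" using uux by simp
  then show ?thesis using first_order_system_top[of x0] a0 by (simp add: z0_def)
qed

lemma v_nonpos_half_strip:
  assumes top: "\<And>x. x > 0 \<Longrightarrow> v (x, 1) \<le> 0" and xy: "x \<ge> 0" "0 \<le> y" "y \<le> 1"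
  shows "v (x, y) \<le> 0"
proof -
  obtain M where M: "\<And>z. z \<in> cstrip \<Longrightarrow> v z \<le> M" using v_bounded_above by blast
  have axis: "v (0, y) \<le> 0" if "0 \<le> y" "y \<le> 1" for y using v_axis[OF that] by simp
  have bottom: "v (x, 0) \<le> 0" for x using v_bottom by simp
  have top': "v (x, 1) \<le> 0" if "x \<ge> 0" for x
    using top[of x] v_axis[of 1] that by (cases "x = 0") auto
  show ?thesis using potential_eq.weak_max_half_strip[OF axis bottom top' M xy] .
qed

lemma v_zero_of_zero_on_R_plus:
  assumes zero: "\<forall>z\<in>R_plus. v z = 0" and p: "p \<in> cstrip"
  shows "v p = 0"
proof (rule continuous_constant_on_cstrip[OF potential_eq.v_continuous _ p])
  fix z assume "z \<in> strip"
  then obtain x y where z: "z = (x, y)" and y: "0 < y" "y < 1" by (cases z) (auto simp: strip_def)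
  consider "x > 0" | "x = 0" | "x < 0" by linarith
  then show "v z = 0"
  proof cases
    case 3
    then have "v (-x, y) = 0" using zero y by (auto simp: R_plus_def)
    then show ?thesis using v_odd[of y "-x"] y by (simp add: z)
  qed (use zero y v_axis[of y] in \<open>auto simp: z R_plus_def\<close>)
qed

theorem v_sign_dichotomy:
  assumes top: "\<forall>p\<in>Gamma_plus. v p \<le> 0"
  shows "(\<forall>p\<in>Gamma_plus \<union> R_plus. v p < 0) \<or> (\<forall>p\<in>cstrip. v p = 0)"
proof -
  have nonpos: "v (x, y) \<le> 0" if "x \<ge> 0" "0 \<le> y" "y \<le> 1" for x y
    using v_nonpos_half_strip[OF _ that] top by (auto simp: Gamma_plus_def)
  have "(\<forall>z\<in>R_plus. v z < 0) \<or> (\<forall>z\<in>R_plus. v z = 0)"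
    using potential_eq.strong_max_R_plus nonpos by (force simp: R_plus_def)
  then show ?thesis
  proof
    assume neg: "\<forall>z\<in>R_plus. v z < 0"
    have "v (x0, 1) < 0" if "x0 > 0" for x0
      using potential_eq.hopf_Gamma_plus[OF nonpos _ that] Dy_v_zero_at_top_zero neg top that
      by (force simp: Gamma_plus_def)
    then show ?thesis using neg by (auto simp: Gamma_plus_def)
  qed (use v_zero_of_zero_on_R_plus in blast)
qed

end

lemma conformal_wave_of_solves_W:
  assumes "C21_loc g" "\<forall>s. deriv g s \<le> 0" "solves_W g \<beta> pt \<mu> \<alpha> \<psi> \<eta>"
  obtains c0 where "conformal_wave g \<mu> \<alpha> \<beta> c0 \<psi> \<eta>"
proof -
  obtain c0 where "c0 > 0" "\<forall>p\<in>strip. (\<mu> - 2 * \<alpha> * (\<eta> p - 1)) * gradsq \<eta> p \<ge> c0"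
    using assms(3) unfolding solves_W_def by blast
  with assms have "conformal_wave g \<mu> \<alpha> \<beta> c0 \<psi> \<eta>"
    unfolding conformal_wave_def solves_W_def C21_loc_def by blast
  then show ?thesis by (rule that)
qed

theorem mainTheorem8:
  fixes g pt dpt :: "real \<Rightarrow> real" and \<beta> \<alpha> :: real
    and \<psi> \<eta> :: "real \<times> real \<Rightarrow> real"
  assumes beta: "0 < \<beta>" "\<beta> < 1"
    and gamma_reg: "C21_loc g"
    and triv: "triv_profile g pt dpt"
    and gamma_nonincr: "\<forall>s. deriv g s \<le> 0"
    and sol: "solves_W g \<beta> pt ((dpt 1)\<^sup>2) \<alpha> \<psi> \<eta>"
    and v_top: "\<forall>p\<in>Gamma_plus. vvel \<psi> \<eta> p \<le> 0"
  shows "(\<forall>p\<in>Gamma_plus \<union> R_plus. vvel \<psi> \<eta> p < 0) \<or> (\<forall>p\<in>cstrip. vvel \<psi> \<eta> p = 0)"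
proof -
  obtain c0 where "conformal_wave g ((dpt 1)\<^sup>2) \<alpha> \<beta> c0 \<psi> \<eta>"
    using conformal_wave_of_solves_W[OF gamma_reg gamma_nonincr sol] .
  then show ?thesis using conformal_wave.v_sign_dichotomy v_top by blast
qed

end
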